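(* Let $C_2$ denote the 2-chain. Then \[ [C_2 \odot C_2]' = \Big\{ \textstyle\bigsqcup_{i=1}^{n} C_2 : n \ge 2 \Big\} \cup \{ X_n : n \ge 3 \}, \] i.e. the posets $P$ with $P \oslash' C_2 \cong C_2$ and $P\not\cong C_2$ are exactly the parallel compositions (disjoint unions with elements of different copies incomparable) of $n\ge2$ copies of the 2-chain and the $n$-crown posets $X_n$ with $n\ge3$.
   Context: $C_2=\{x<y\}$. The $n$-crown $X_n$ has elements $a_1,\dots,a_n,b_1,\dots,b_n$ with relations exactly $a_i<b_j$ for $i\ne j$. Notation for a poset $P$: $J^-(a)=\{c:c\le a\}$, $J^+(a)=\{c:a\le c\}$; $\ell(X)$ is the cardinality of a longest chain of a poset $X$. A subset $A$ of a poset $X$ is maximally ordered in $X$ if $|\{(a,b)\in A\times A:a<b\}|$ is maximal among subsets of $X$ of cardinality $|A|$. $A\subseteq P$ is linked if for all $a<b$ in $A$, either $b$ covers $a$ or there exists $c\in J^+(a)\cap J^-(b)$ with $c\in A$. For $\sigma\in\mathrm{Aut}(P)$, $\Sigma(\sigma)=\{a:\sigma(a)\ne a\}$. For finite $Q$ and $r\ge2$: $\sigma\in\mathrm{Aut}(P)$ is a $(Q,r)$-generator if there exist subsets $S_0,\dots,S_{r-1}\subset\Sigma(\sigma)$, each isomorphic to $Q$, which are smallest maximally ordered subsets of $\Sigma(\sigma)$ with $\sigma(S_i)=S_{(i+1)\bmod r}$, $\ell(S_i)=\ell(\Sigma(\sigma))$, $\bigcup_iS_i=\Sigma(\sigma)$;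 distinct $S_i,S_j$ are $(Q,r)$-symmetric subsets. Elements $a,b$ are $(Q,r,0)$-symmetric if $a=b$; $(Q,r,1)$-symmetric if there are $(Q,r)$-symmetric subsets $A,B$ with generator $\sigma$, $a\in A$, $b=\sigma^q(a)\in B$, $1\le q<r$; for $n\ge2$, $(Q,r,n)$-symmetric if not $(Q,r,j)$-symmetric for $j<n$ but there exist $c$, $j<n$ with $a$ $(Q,r,j)$-symmetric to $c$ and $c$ $(Q,r,n-j)$-symmetric to $b$; $(Q,r)$-symmetric if $(Q,r,n)$-symmetric for some $n\ge0$ (an equivalence relation). The retract $P\oslash_rQ$ is the quotient poset of the equivalence classes with $E\le F$ iff some $e\in E$, $f\in F$ satisfy $e\le f$. For a linked subset $A\cong Q$, the $(Q,r)$-symmetry group of $A$ is the largest subgroup of $\mathrm{Aut}(P)$ of $(Q,r)$-generators whose action fixes every $b\in P$ to which no $a\in A$ is $(Q,r)$-symmetric; the $(Q,r)$-symmetry set of $A$ is the set of elements not fixed by this group. The $(Q,r)$-symmetry of a $(Q,r)$-symmetry set $S$ is composite if there exist a finite poset $\hat Q$, $\hat r\ge2$ and a $(\hat Q,\hat r)$-symmetry set $\hat S\subseteq S$ with either $\hat Q$ a proper subposet of $Q$, or $\hat Q=Q$ and $\hat r<r$; it is prime otherwise. $P\oslash'_rQ$ is the retraction using only prime $(Q,r)$-symmetries, and $[R\odot_rQ]'=\{P:P\oslash'_rQ\cong R,\ P\not\cong R\}$; for $r=2$ the index is dropped. *)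

theory Defs
  imports Main
begin

definition finite_poset :: "'a set \<Rightarrow> ('a \<Rightarrow> 'a \<Rightarrow> bool) \<Rightarrow> bool" where
  "finite_poset S le \<longleftrightarrow> finite S \<and>
     (\<forall>a\<in>S. le a a) \<and>
     (\<forall>a\<in>S. \<forall>b\<in>S. le a b \<and> le b a \<longrightarrow> a = b) \<and>
     (\<forall>a\<in>S. \<forall>b\<in>S. \<forall>c\<in>S. le a b \<and> le b c \<longrightarrow> le a c)"

definition lt_of :: "('a \<Rightarrow> 'a \<Rightarrow> bool) \<Rightarrow> 'a \<Rightarrow> 'a \<Rightarrow> bool" where
  "lt_of le a b \<longleftrightarrow> le a b \<and> a \<noteq> b"

definition poset_iso :: "'a set \<Rightarrow> ('a \<Rightarrow> 'a \<Rightarrow> bool) \<Rightarrow> 'b set \<Rightarrow> ('b \<Rightarrow> 'b \<Rightarrow> bool) \<Rightarrow> bool" where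
  "poset_iso S1 le1 S2 le2 \<longleftrightarrow>
     (\<exists>f. bij_betw f S1 S2 \<and> (\<forall>a\<in>S1. \<forall>b\<in>S1. le1 a b \<longleftrightarrow> le2 (f a) (f b)))"

definition poset_aut :: "'a set \<Rightarrow> ('a \<Rightarrow> 'a \<Rightarrow> bool) \<Rightarrow> ('a \<Rightarrow> 'a) \<Rightarrow> bool" where
  "poset_aut S le \<sigma> \<longleftrightarrow> bij_betw \<sigma> S S \<and> (\<forall>a\<in>S. \<forall>b\<in>S. le a b \<longleftrightarrow> le (\<sigma> a) (\<sigma> b))
     \<and> (\<forall>a. a \<notin> S \<longrightarrow> \<sigma> a = a)"

definition support :: "'a set \<Rightarrow> ('a \<Rightarrow> 'a) \<Rightarrow> 'a set" where
  "support S \<sigma> = {a\<in>S. \<sigma> a \<noteq> a}"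

definition chain_len :: "('a \<Rightarrow> 'a \<Rightarrow> bool) \<Rightarrow> 'a set \<Rightarrow> nat" where
  "chain_len le X = Max {card C | C. C \<subseteq> X \<and> (\<forall>x\<in>C. \<forall>y\<in>C. le x y \<or> le y x)}"

definition npairs :: "('a \<Rightarrow> 'a \<Rightarrow> bool) \<Rightarrow> 'a set \<Rightarrow> nat" where
  "npairs le A = card {(a, b). a \<in> A \<and> b \<in> A \<and> lt_of le a b}"

definition max_ordered :: "('a \<Rightarrow> 'a \<Rightarrow> bool) \<Rightarrow> 'a set \<Rightarrow> 'a set \<Rightarrow> bool" where
  "max_ordered le X A \<longleftrightarrow> A \<subseteq> X \<and>
     (\<forall>B. B \<subseteq> X \<and> card B = card A \<longrightarrow> npairs le B \<le> npairs le A)"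

definition covers :: "'a set \<Rightarrow> ('a \<Rightarrow> 'a \<Rightarrow> bool) \<Rightarrow> 'a \<Rightarrow> 'a \<Rightarrow> bool" where
  "covers S le a b \<longleftrightarrow> lt_of le a b \<and> \<not> (\<exists>c\<in>S. lt_of le a c \<and> lt_of le c b)"

definition linked :: "'a set \<Rightarrow> ('a \<Rightarrow> 'a \<Rightarrow> bool) \<Rightarrow> 'a set \<Rightarrow> bool" where
  "linked S le A \<longleftrightarrow> A \<subseteq> S \<and>
     (\<forall>a\<in>A. \<forall>b\<in>A. lt_of le a b \<longrightarrow>
        covers S le a b \<or> (\<exists>c\<in>A. lt_of le a c \<and> lt_of le c b))"

text \<open>Conditions on a cyclic family T 0, ..., T (r-1) of subsets of \<open>\<Sigma>(\<sigma>)\<close>, except isomorphism to Q.\<close>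
definition cyc_family :: "'a set \<Rightarrow> ('a \<Rightarrow> 'a \<Rightarrow> bool) \<Rightarrow> nat \<Rightarrow> ('a \<Rightarrow> 'a) \<Rightarrow> (nat \<Rightarrow> 'a set) \<Rightarrow> bool" where
  "cyc_family S le r \<sigma> T \<longleftrightarrow>
     (\<forall>i<r. T i \<subseteq> support S \<sigma> \<and> max_ordered le (support S \<sigma>) (T i)
            \<and> \<sigma> ` T i = T (Suc i mod r)
            \<and> chain_len le (T i) = chain_len le (support S \<sigma>))
     \<and> (\<Union>i<r. T i) = support S \<sigma>"

definition generator_fam ::
  "'a set \<Rightarrow> ('a \<Rightarrow> 'a \<Rightarrow> bool) \<Rightarrow> 'b set \<Rightarrow> ('b \<Rightarrow> 'b \<Rightarrow> bool) \<Rightarrow> nat \<Rightarrow> ('a \<Rightarrow> 'a) \<Rightarrow> (nat \<Rightarrow> 'a set) \<Rightarrow> bool" where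
  "generator_fam S le SQ leQ r \<sigma> T \<longleftrightarrow>
     2 \<le> r \<and> poset_aut S le \<sigma> \<and> cyc_family S le r \<sigma> T
     \<and> (\<forall>i<r. poset_iso (T i) le SQ leQ)
     \<and> \<not> (\<exists>U. cyc_family S le r \<sigma> U \<and> card (U 0) < card SQ)"

definition generator ::
  "'a set \<Rightarrow> ('a \<Rightarrow> 'a \<Rightarrow> bool) \<Rightarrow> 'b set \<Rightarrow> ('b \<Rightarrow> 'b \<Rightarrow> bool) \<Rightarrow> nat \<Rightarrow> ('a \<Rightarrow> 'a) \<Rightarrow> bool" where
  "generator S le SQ leQ r \<sigma> \<longleftrightarrow> (\<exists>T. generator_fam S le SQ leQ r \<sigma> T)"

definition sym1_via ::
  "'a set \<Rightarrow> ('a \<Rightarrow> 'a \<Rightarrow> bool) \<Rightarrow> 'b set \<Rightarrow> ('b \<Rightarrow> 'b \<Rightarrow> bool) \<Rightarrow> nat \<Rightarrow> ('a \<Rightarrow> 'a) \<Rightarrow> 'a \<Rightarrow> 'a \<Rightarrow> bool" where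
  "sym1_via S le SQ leQ r \<sigma> a b \<longleftrightarrow>
     (\<exists>T i j q. generator_fam S le SQ leQ r \<sigma> T \<and> i < r \<and> j < r \<and> T i \<noteq> T j
        \<and> a \<in> T i \<and> b \<in> T j \<and> 1 \<le> q \<and> q < r \<and> b = (\<sigma> ^^ q) a)"

definition sym1 :: "'a set \<Rightarrow> ('a \<Rightarrow> 'a \<Rightarrow> bool) \<Rightarrow> 'b set \<Rightarrow> ('b \<Rightarrow> 'b \<Rightarrow> bool) \<Rightarrow> nat \<Rightarrow> 'a \<Rightarrow> 'a \<Rightarrow> bool" where
  "sym1 S le SQ leQ r a b \<longleftrightarrow> (\<exists>\<sigma>. sym1_via S le SQ leQ r \<sigma> a b)"

text \<open>(Q,r)-symmetric elements: (Q,r,n)-symmetric for some n, i.e. the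
  reflexive-transitive closure of the (Q,r,1) relation.\<close>
definition qr_sym :: "'a set \<Rightarrow> ('a \<Rightarrow> 'a \<Rightarrow> bool) \<Rightarrow> 'b set \<Rightarrow> ('b \<Rightarrow> 'b \<Rightarrow> bool) \<Rightarrow> nat \<Rightarrow> 'a \<Rightarrow> 'a \<Rightarrow> bool" where
  "qr_sym S le SQ leQ r = (sym1 S le SQ leQ r)\<^sup>*\<^sup>*"

text \<open>The (Q,r)-generators belonging to the (Q,r)-symmetry group of A (those fixing every
  b to which no a in A is (Q,r)-symmetric); the group is the one generated by them.\<close>
definition sym_gens :: "'a set \<Rightarrow> ('a \<Rightarrow> 'a \<Rightarrow> bool) \<Rightarrow> 'b set \<Rightarrow> ('b \<Rightarrow> 'b \<Rightarrow> bool) \<Rightarrow> nat \<Rightarrow> 'a set \<Rightarrow> ('a \<Rightarrow> 'a) set" where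
  "sym_gens S le SQ leQ r A =
     {\<sigma>. generator S le SQ leQ r \<sigma> \<and>
          (\<forall>b\<in>S. \<not> (\<exists>a\<in>A. qr_sym S le SQ leQ r a b) \<longrightarrow> \<sigma> b = b)}"

text \<open>Elements not fixed by the group generated by \<open>sym_gens\<close> (= moved by some generator).\<close>
definition sym_set_of :: "'a set \<Rightarrow> ('a \<Rightarrow> 'a \<Rightarrow> bool) \<Rightarrow> 'b set \<Rightarrow> ('b \<Rightarrow> 'b \<Rightarrow> bool) \<Rightarrow> nat \<Rightarrow> 'a set \<Rightarrow> 'a set" where
  "sym_set_of S le SQ leQ r A = {x\<in>S. \<exists>\<sigma>\<in>sym_gens S le SQ leQ r A. \<sigma> x \<noteq> x}"

definition is_sym_set :: "'a set \<Rightarrow> ('a \<Rightarrow> 'a \<Rightarrow> bool) \<Rightarrow> 'b set \<Rightarrow> ('b \<Rightarrow> 'b \<Rightarrow> bool) \<Rightarrow> nat \<Rightarrow> 'a set \<Rightarrow> bool" where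
  "is_sym_set S le SQ leQ r X \<longleftrightarrow>
     (\<exists>A. linked S le A \<and> poset_iso A le SQ leQ \<and> X = sym_set_of S le SQ leQ r A)"

text \<open>Composite: some nonempty (Q',r')-symmetry set inside X, with Q' (a subposet of Q, up to
  isomorphism) proper, or Q' = Q and r' < r.\<close>
definition composite_sym :: "'a set \<Rightarrow> ('a \<Rightarrow> 'a \<Rightarrow> bool) \<Rightarrow> 'b set \<Rightarrow> ('b \<Rightarrow> 'b \<Rightarrow> bool) \<Rightarrow> nat \<Rightarrow> 'a set \<Rightarrow> bool" where
  "composite_sym S le SQ leQ r X \<longleftrightarrow>
     (\<exists>SQ' r' X'. SQ' \<subseteq> SQ \<and> 2 \<le> r' \<and> is_sym_set S le SQ' leQ r' X' \<and> X' \<subseteq> X \<and> X' \<noteq> {}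
        \<and> (SQ' \<subset> SQ \<or> (SQ' = SQ \<and> r' < r)))"

definition prime_sym_set :: "'a set \<Rightarrow> ('a \<Rightarrow> 'a \<Rightarrow> bool) \<Rightarrow> 'b set \<Rightarrow> ('b \<Rightarrow> 'b \<Rightarrow> bool) \<Rightarrow> nat \<Rightarrow> 'a set \<Rightarrow> 'a set \<Rightarrow> bool" where
  "prime_sym_set S le SQ leQ r A X \<longleftrightarrow>
     linked S le A \<and> poset_iso A le SQ leQ \<and> X = sym_set_of S le SQ leQ r A
     \<and> \<not> composite_sym S le SQ leQ r X"

definition sym1_prime :: "'a set \<Rightarrow> ('a \<Rightarrow> 'a \<Rightarrow> bool) \<Rightarrow> 'b set \<Rightarrow> ('b \<Rightarrow> 'b \<Rightarrow> bool) \<Rightarrow> nat \<Rightarrow> 'a \<Rightarrow> 'a \<Rightarrow> bool" where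
  "sym1_prime S le SQ leQ r a b \<longleftrightarrow>
     (\<exists>A X \<sigma>. prime_sym_set S le SQ leQ r A X \<and> \<sigma> \<in> sym_gens S le SQ leQ r A
        \<and> sym1_via S le SQ leQ r \<sigma> a b)"

definition prime_sym_rel :: "'a set \<Rightarrow> ('a \<Rightarrow> 'a \<Rightarrow> bool) \<Rightarrow> 'b set \<Rightarrow> ('b \<Rightarrow> 'b \<Rightarrow> bool) \<Rightarrow> nat \<Rightarrow> 'a rel" where
  "prime_sym_rel S le SQ leQ r =
     {(a, b). a \<in> S \<and> b \<in> S \<and> (sym1_prime S le SQ leQ r)\<^sup>*\<^sup>* a b}"

definition retract'_carrier :: "'a set \<Rightarrow> ('a \<Rightarrow> 'a \<Rightarrow> bool) \<Rightarrow> 'b set \<Rightarrow> ('b \<Rightarrow> 'b \<Rightarrow> bool) \<Rightarrow> nat \<Rightarrow> 'a set set" where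
  "retract'_carrier S le SQ leQ r = S // prime_sym_rel S le SQ leQ r"

definition quot_le :: "('a \<Rightarrow> 'a \<Rightarrow> bool) \<Rightarrow> 'a set \<Rightarrow> 'a set \<Rightarrow> bool" where
  "quot_le le E F \<longleftrightarrow> (\<exists>e\<in>E. \<exists>f\<in>F. le e f)"

definition in_odot' :: "'a set \<Rightarrow> ('a \<Rightarrow> 'a \<Rightarrow> bool) \<Rightarrow> 'c set \<Rightarrow> ('c \<Rightarrow> 'c \<Rightarrow> bool)
     \<Rightarrow> 'b set \<Rightarrow> ('b \<Rightarrow> 'b \<Rightarrow> bool) \<Rightarrow> nat \<Rightarrow> bool" where
  "in_odot' S le SR leR SQ leQ r \<longleftrightarrow>
     poset_iso (retract'_carrier S le SQ leQ r) (quot_le le) SR leR \<and> \<not> poset_iso S le SR leR"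

definition C2_carrier :: "bool set" where "C2_carrier = UNIV"
definition C2_le :: "bool \<Rightarrow> bool \<Rightarrow> bool" where "C2_le x y \<longleftrightarrow> x \<le> y"

definition parC2_carrier :: "nat \<Rightarrow> (nat \<times> bool) set" where
  "parC2_carrier n = {..<n} \<times> UNIV"
definition parC2_le :: "nat \<times> bool \<Rightarrow> nat \<times> bool \<Rightarrow> bool" where
  "parC2_le p q \<longleftrightarrow> fst p = fst q \<and> snd p \<le> snd q"

definition crown_carrier :: "nat \<Rightarrow> (nat \<times> bool) set" where
  "crown_carrier n = {..<n} \<times> UNIV"
definition crown_le :: "nat \<times> bool \<Rightarrow> nat \<times> bool \<Rightarrow> bool" where
  "crown_le p q \<longleftrightarrow> p = q \<or> (\<not> snd p \<and> snd q \<and> fst p \<noteq> fst q)"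

end

theory Submission
  imports Defs "HOL-Combinatorics.Transposition"
begin

text \<open>Symmetric elements are exchanged by automorphisms, so they have equally many elements below
  them and are incomparable. Hence if \<open>P \<oslash>' C\<^sub>2 \<cong> C\<^sub>2\<close>, the two classes \<open>E < F\<close> split \<open>P\<close>
  into a bottom and a top layer. Twins in \<open>E\<close> would carry a \<open>({True}, 2)\<close>-symmetry, making the
  prime symmetry composite; without twins every \<open>(C\<^sub>2, 2)\<close>-generator is a swap, a simultaneous
  transposition of \<open>a, a' \<in> E\<close> and \<open>b, b' \<in> F\<close> with \<open>a < b\<close>, \<open>a' < b'\<close> and no cross relations.
  Swaps compose by conjugation, so any two elements of one layer are exchanged by a single swap,
  and this forces the comparabilities between the layers to form a perfect matching (\<open>n\<close> copies of
  \<open>C\<^sub>2\<close>) or the complement of one (the crown \<open>X\<^sub>n\<close>, where \<open>X\<^sub>2\<close> is again two copies of \<open>C\<^sub>2\<close>).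
  Conversely, in these posets every automorphism moves a comparable pair, so no
  \<open>(C\<^sub>2, 2)\<close>-symmetry is composite, and the swaps make \<open>E\<close> and \<open>F\<close> the two classes.\<close>

section \<open>Swaps of a relation between two sets\<close>

lemma transpose_mem: "a \<in> A \<Longrightarrow> b \<in> A \<Longrightarrow> x \<in> A \<Longrightarrow> transpose a b x \<in> A"
  by (simp add: transpose_def)

definition rel_swap :: "'a set \<Rightarrow> 'b set \<Rightarrow> ('a \<Rightarrow> 'b \<Rightarrow> bool) \<Rightarrow> 'a \<Rightarrow> 'a \<Rightarrow> 'b \<Rightarrow> 'b \<Rightarrow> bool" where
  "rel_swap E F R a a' b b' \<longleftrightarrow> a \<in> E \<and> a' \<in> E \<and> b \<in> F \<and> b' \<in> F \<and> a \<noteq> a' \<and> b \<noteq> b' \<and>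
     R a b \<and> \<not> R a b' \<and>
     (\<forall>x\<in>E. \<forall>y\<in>F. R (transpose a a' x) (transpose b b' y) \<longleftrightarrow> R x y)"

lemma rel_swapD:
  assumes "rel_swap E F R a a' b b'"
  shows "a \<in> E" "a' \<in> E" "b \<in> F" "b' \<in> F" "a \<noteq> a'" "b \<noteq> b'"
    and "R a b" "R a' b'" "\<not> R a b'" "\<not> R a' b"
    and "\<And>x. x \<in> E \<Longrightarrow> x \<noteq> a \<Longrightarrow> x \<noteq> a' \<Longrightarrow> R x b \<longleftrightarrow> R x b'"
    and "\<And>y. y \<in> F \<Longrightarrow> y \<noteq> b \<Longrightarrow> y \<noteq> b' \<Longrightarrow> R a y \<longleftrightarrow> R a' y"
    and "\<And>x y. x \<in> E \<Longrightarrow> y \<in> F \<Longrightarrow> R (transpose a a' x) (transpose b b' y) \<longleftrightarrow> R x y"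
proof -
  note parts = assms[unfolded rel_swap_def]
  then have inv: "\<And>x y. x \<in> E \<Longrightarrow> y \<in> F \<Longrightarrow> R (transpose a a' x) (transpose b b' y) \<longleftrightarrow> R x y"
    by blast
  show "a \<in> E" "a' \<in> E" "b \<in> F" "b' \<in> F" "a \<noteq> a'" "b \<noteq> b'" "R a b" "\<not> R a b'"
    using parts by blast+
  with inv[of a b] inv[of a b'] show "R a' b'" "\<not> R a' b" by simp_all
  show "R x b \<longleftrightarrow> R x b'" if "x \<in> E" "x \<noteq> a" "x \<noteq> a'" for x
    using inv[of x b] that \<open>b \<in> F\<close> by simp
  show "R a y \<longleftrightarrow> R a' y" if "y \<in> F" "y \<noteq> b" "y \<noteq> b'" for y
    using inv[of a' y] that \<open>a' \<in> E\<close> by simp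
  show "R (transpose a a' x) (transpose b b' y) \<longleftrightarrow> R x y" if "x \<in> E" "y \<in> F" for x y
    using inv that .
qed

lemma rel_swap_commute:
  assumes "rel_swap E F R a a' b b'"
  shows "rel_swap E F R a' a b' b"
  using rel_swapD[OF assms] unfolding rel_swap_def transpose_commute[of a' a] transpose_commute[of b' b]
  by blast

lemma rel_swap_complement: "rel_swap E F R a a' b b' \<longleftrightarrow> rel_swap E F (\<lambda>x y. \<not> R x y) a a' b' b"
  unfolding rel_swap_def transpose_commute[of b' b] by auto

lemma rel_swap_converse:
  assumes "rel_swap E F R a a' b b'"
  shows "rel_swap F E (\<lambda>y x. R x y) b b' a a'"
  using rel_swapD[OF assms] unfolding rel_swap_def by blast

text \<open>Conjugating the second swap by the first one yields the composite swap.\<close>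
lemma rel_swap_trans:
  assumes s1: "rel_swap E F R a a1 b b1" and s2: "rel_swap E F R a1 a2 c c2" and "a \<noteq> a2"
  shows "rel_swap E F R a a2 (transpose b b1 c) (transpose b b1 c2)"
proof -
  note S1 = rel_swapD[OF s1] and S2 = rel_swapD[OF s2]
  let ?\<tau> = "transpose b b1"
  have conjE: "transpose a a1 (transpose a1 a2 (transpose a a1 x)) = transpose a a2 x" for x
    using \<open>a \<noteq> a2\<close> S2(5) by (intro transpose_triple) auto
  have conjF: "?\<tau> (transpose c c2 (?\<tau> y)) = transpose (?\<tau> c) (?\<tau> c2) y" for y
    by (auto simp: transpose_def)
  have memE: "\<And>x. x \<in> E \<Longrightarrow> transpose a a1 x \<in> E" "\<And>x. x \<in> E \<Longrightarrow> transpose a1 a2 x \<in> E"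
    using S1(1,2) S2(2) by (auto intro: transpose_mem)
  have memF: "\<And>y. y \<in> F \<Longrightarrow> ?\<tau> y \<in> F" "\<And>y. y \<in> F \<Longrightarrow> transpose c c2 y \<in> F"
    using S1(3,4) S2(3,4) by (auto intro: transpose_mem)
  have "R (transpose a a2 x) (transpose (?\<tau> c) (?\<tau> c2) y) \<longleftrightarrow> R x y" if "x \<in> E" "y \<in> F" for x y
    using that memE memF S1(13) S2(13) by (simp flip: conjE conjF)
  moreover have "R a (?\<tau> c)" "\<not> R a (?\<tau> c2)"
    using S1(13)[of a1 c] S1(13)[of a1 c2] S1(2) S2(3,4,7,9) by simp_all
  moreover have "?\<tau> c \<noteq> ?\<tau> c2"
    using S2(6) by (simp add: transpose_eq_iff) (metis transpose_eq_imp_eq)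
  ultimately show ?thesis
    unfolding rel_swap_def using S1(1,3,4) S2(2) memF(1)[OF S2(3)] memF(1)[OF S2(4)] \<open>a \<noteq> a2\<close> by blast
qed

definition pairwise_swappable :: "'a set \<Rightarrow> 'b set \<Rightarrow> ('a \<Rightarrow> 'b \<Rightarrow> bool) \<Rightarrow> bool" where
  "pairwise_swappable E F R \<longleftrightarrow>
     (\<forall>a\<in>E. \<forall>a'\<in>E. a \<noteq> a' \<longrightarrow> (\<exists>b b'. rel_swap E F R a a' b b')) \<and>
     (\<forall>b\<in>F. \<forall>b'\<in>F. b \<noteq> b' \<longrightarrow> (\<exists>a a'. rel_swap E F R a a' b b'))"

lemma pairwise_swappableD:
  assumes "pairwise_swappable E F R"
  shows "\<And>a a'. a \<in> E \<Longrightarrow> a' \<in> E \<Longrightarrow> a \<noteq> a' \<Longrightarrow> \<exists>b b'. rel_swap E F R a a' b b'"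
    and "\<And>b b'. b \<in> F \<Longrightarrow> b' \<in> F \<Longrightarrow> b \<noteq> b' \<Longrightarrow> \<exists>a a'. rel_swap E F R a a' b b'"
  using assms unfolding pairwise_swappable_def by auto

definition perfect_matching :: "'a set \<Rightarrow> 'b set \<Rightarrow> ('a \<Rightarrow> 'b \<Rightarrow> bool) \<Rightarrow> bool" where
  "perfect_matching E F R \<longleftrightarrow> (\<forall>x\<in>E. \<exists>!y. y \<in> F \<and> R x y) \<and> (\<forall>y\<in>F. \<exists>!x. x \<in> E \<and> R x y)"

definition twin_free :: "'a set \<Rightarrow> 'b set \<Rightarrow> ('a \<Rightarrow> 'b \<Rightarrow> bool) \<Rightarrow> bool" where
  "twin_free E F R \<longleftrightarrow> (\<forall>a\<in>E. \<forall>a'\<in>E. (\<forall>y\<in>F. R a y \<longleftrightarrow> R a' y) \<longrightarrow> a = a')"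

lemma pairwise_swappable_complement:
  assumes "pairwise_swappable E F R"
  shows "pairwise_swappable E F (\<lambda>x y. \<not> R x y)"
  using assms unfolding pairwise_swappable_def by (metis rel_swap_complement)

lemma twin_free_complement: "twin_free E F (\<lambda>x y. \<not> R x y) \<longleftrightarrow> twin_free E F R"
  unfolding twin_free_def by simp

lemma perfect_matching_converse: "perfect_matching F E (\<lambda>y x. R x y) \<longleftrightarrow> perfect_matching E F R"
  unfolding perfect_matching_def by blast

lemma perfect_matching_iff_bij_betw:
  "perfect_matching E F R \<longleftrightarrow> (\<exists>\<pi>. bij_betw \<pi> E F \<and> (\<forall>x\<in>E. \<forall>y\<in>F. R x y \<longleftrightarrow> y = \<pi> x))"
proof
  assume pm: "perfect_matching E F R"
  define \<pi> where "\<pi> x = (THE y. y \<in> F \<and> R x y)" for x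
  have \<pi>: "\<pi> x \<in> F \<and> R x (\<pi> x)" if "x \<in> E" for x
    using pm that theI'[of "\<lambda>y. y \<in> F \<and> R x y"] unfolding perfect_matching_def \<pi>_def by blast
  have R\<pi>: "\<forall>x\<in>E. \<forall>y\<in>F. R x y \<longleftrightarrow> y = \<pi> x"
    using pm \<pi> unfolding perfect_matching_def by blast
  have "inj_on \<pi> E"
    using pm \<pi> unfolding perfect_matching_def inj_on_def by metis
  moreover have "\<pi> ` E = F"
    using pm \<pi> R\<pi> unfolding perfect_matching_def by blast
  ultimately show "\<exists>\<pi>. bij_betw \<pi> E F \<and> (\<forall>x\<in>E. \<forall>y\<in>F. R x y \<longleftrightarrow> y = \<pi> x)"
    using R\<pi> unfolding bij_betw_def by blast
next
  assume "\<exists>\<pi>. bij_betw \<pi> E F \<and> (\<forall>x\<in>E. \<forall>y\<in>F. R x y \<longleftrightarrow> y = \<pi> x)"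
  then show "perfect_matching E F R"
    unfolding perfect_matching_def bij_betw_def inj_on_def by blast
qed

lemma perfect_matching_indexed:
  assumes "inj_on e I" "inj_on f I" and R: "\<And>i j. i \<in> I \<Longrightarrow> j \<in> I \<Longrightarrow> R (e i) (f j) \<longleftrightarrow> i = j"
  shows "perfect_matching (e ` I) (f ` I) R"
proof -
  have "bij_betw (f \<circ> inv_into I e) (e ` I) (f ` I)"
    using assms(1,2) by (metis bij_betw_comp_iff bij_betw_imageI bij_betw_inv_into inj_on_imp_bij_betw)
  moreover have "R x y \<longleftrightarrow> y = (f \<circ> inv_into I e) x" if "x \<in> e ` I" "y \<in> f ` I" for x y
    using that R assms(1,2) by (auto simp: inj_on_eq_iff)
  ultimately show ?thesis
    unfolding perfect_matching_iff_bij_betw by blast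
qed

lemma perfect_matching_twin_free:
  assumes "perfect_matching E F R"
  shows "twin_free E F R"
  unfolding twin_free_def
proof (intro ballI impI)
  fix a a' assume a: "a \<in> E" "a' \<in> E" and twins: "\<forall>y\<in>F. R a y \<longleftrightarrow> R a' y"
  obtain b where "b \<in> F" "R a b"
    using assms a(1) unfolding perfect_matching_def by blast
  then show "a = a'"
    using assms a twins unfolding perfect_matching_def by blast
qed

lemma perfect_matching_rel_swap:
  assumes pm: "perfect_matching E F R" and a: "a \<in> E" "a' \<in> E" "a \<noteq> a'"
  shows "\<exists>b b'. rel_swap E F R a a' b b'"
proof -
  obtain \<pi> where \<pi>: "bij_betw \<pi> E F" "\<And>x y. x \<in> E \<Longrightarrow> y \<in> F \<Longrightarrow> R x y \<longleftrightarrow> y = \<pi> x"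
    using pm unfolding perfect_matching_iff_bij_betw by blast
  have \<pi>E: "\<And>x. x \<in> E \<Longrightarrow> \<pi> x \<in> F" and inj: "inj_on \<pi> E"
    using \<pi>(1) by (auto simp: bij_betw_def)
  have \<pi>_ne: "\<pi> x \<noteq> \<pi> x'" if "x \<in> E" "x' \<in> E" "x \<noteq> x'" for x x'
    using inj that by (auto dest: inj_onD)
  let ?\<tau> = "transpose (\<pi> a) (\<pi> a')"
  have \<pi>_transpose: "\<pi> (transpose a a' x) = ?\<tau> (\<pi> x)" if "x \<in> E" for x
    using \<pi>_ne[OF that a(1)] \<pi>_ne[OF that a(2)] by (cases "x = a \<or> x = a'") auto
  have "rel_swap E F R a a' (\<pi> a) (\<pi> a')"
    unfolding rel_swap_def
  proof (intro conjI ballI)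
    fix x y assume xy: "x \<in> E" "y \<in> F"
    have mem: "transpose a a' x \<in> E" "?\<tau> y \<in> F"
      using xy a \<pi>E by (auto intro: transpose_mem)
    have "R (transpose a a' x) (?\<tau> y) \<longleftrightarrow> ?\<tau> y = ?\<tau> (\<pi> x)"
      using \<pi>(2)[OF mem] \<pi>_transpose[OF xy(1)] by simp
    also have "\<dots> \<longleftrightarrow> R x y"
      using \<pi>(2)[OF xy] transpose_eq_imp_eq by metis
    finally show "R (transpose a a' x) (?\<tau> y) \<longleftrightarrow> R x y" .
  qed (use a \<pi>E \<pi>(2) \<pi>_ne in \<open>simp_all\<close>)
  then show ?thesis by blast
qed

lemma perfect_matching_pairwise_swappable:
  assumes pm: "perfect_matching E F R"
  shows "pairwise_swappable E F R"
  unfolding pairwise_swappable_def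
proof (intro conjI ballI impI)
  show "\<exists>b b'. rel_swap E F R a a' b b'" if "a \<in> E" "a' \<in> E" "a \<noteq> a'" for a a'
    using perfect_matching_rel_swap[OF pm that] .
  fix b b' assume b: "b \<in> F" "b' \<in> F" "b \<noteq> b'"
  have "perfect_matching F E (\<lambda>y x. R x y)"
    using pm perfect_matching_converse by blast
  from perfect_matching_rel_swap[OF this b] obtain a a' where "rel_swap F E (\<lambda>y x. R x y) b b' a a'"
    by blast
  then show "\<exists>a a'. rel_swap E F R a a' b b'"
    using rel_swap_converse by fastforce
qed

lemma perfect_matching_if_unique_neighbour:
  assumes sw: "pairwise_swappable E F R" and a0: "a0 \<in> E" "\<exists>!y. y \<in> F \<and> R a0 y"
  shows "perfect_matching E F R"
proof -
  obtain b0 where b0: "b0 \<in> F" "R a0 b0" "\<And>y. y \<in> F \<Longrightarrow> R a0 y \<Longrightarrow> y = b0"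
    using a0(2) by blast
  have rows: "\<exists>!y. y \<in> F \<and> R x y" if x: "x \<in> E" for x
  proof (cases "x = a0")
    case False
    then obtain b b' where s: "rel_swap E F R a0 x b b'"
      using pairwise_swappableD(1)[OF sw a0(1) x] by blast
    note S = rel_swapD[OF s]
    have bb0: "b = b0" using b0(3) S(3,7) by blast
    have "y = b'" if y: "y \<in> F" "R x y" for y
    proof (rule ccontr)
      assume "y \<noteq> b'"
      moreover have "y \<noteq> b" using y S(10) by blast
      ultimately have "R a0 y" using S(12)[OF y(1)] y(2) by blast
      then show False using b0(3)[OF y(1)] bb0 \<open>y \<noteq> b\<close> by blast
    qed
    then show ?thesis
      using S(4,8) by blast
  qed (use a0 in blast)
  have cols_ex: "\<exists>x. x \<in> E \<and> R x y" if y: "y \<in> F" for y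
  proof (cases "y = b0")
    case False
    then obtain u u' where "rel_swap E F R u u' b0 y"
      using pairwise_swappableD(2)[OF sw b0(1) y] by blast
    from rel_swapD(2,8)[OF this] show ?thesis by blast
  qed (use a0 b0 in blast)
  have cols_uniq: "x1 = x2" if y: "y \<in> F" and x12: "x1 \<in> E" "R x1 y" "x2 \<in> E" "R x2 y" for x1 x2 y
  proof (rule ccontr)
    assume "x1 \<noteq> x2"
    then obtain b b' where s: "rel_swap E F R x1 x2 b b'"
      using pairwise_swappableD(1)[OF sw] x12 by blast
    note S = rel_swapD[OF s]
    have "b = y"
      using rows[of x1] x12(1,2) y S(3,7) by blast
    then show False
      using S(10) x12(4) by blast
  qed
  show ?thesis
    unfolding perfect_matching_def using rows cols_ex cols_uniq by blast
qed

text \<open>If some \<open>z\<close> were related to neither \<open>a\<close> nor \<open>a'\<close>, a swap \<open>(u, u', b, c)\<close> would need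
  \<open>u' = a'\<close>, and a swap \<open>(v, v', b', z)\<close> would need both \<open>v = a'\<close> and \<open>v = u\<close>.\<close>
lemma rel_swap_covers:
  assumes sw: "pairwise_swappable E F R" and s: "rel_swap E F R a a' b b'"
    and c: "c \<in> F" "R a c" "c \<noteq> b"
  shows "\<forall>z\<in>F. R a z \<or> R a' z"
proof (rule ccontr)
  assume "\<not> ?thesis"
  then obtain z where z: "z \<in> F" "\<not> R a z" "\<not> R a' z" by blast
  note S = rel_swapD[OF s]
  note swap_top = pairwise_swappableD(2)[OF sw]
  have cb': "c \<noteq> b'" using c S(9) by auto
  have a'c: "R a' c" using S(12)[OF c(1) c(3) cb'] c(2) by simp
  obtain u u' where su: "rel_swap E F R u u' b c" using swap_top[OF S(3) c(1)] c(3) by metis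
  note U = rel_swapD[OF su]
  have u'a': "u' = a'"
  proof (rule ccontr)
    assume ne: "u' \<noteq> a'"
    have "a' \<noteq> u" using U(7) S(10) by auto
    then have "R a' b \<longleftrightarrow> R a' c" using U(11)[OF S(2)] ne by simp
    then show False using S(10) a'c by simp
  qed
  have uz: "\<not> R u z" using U(12)[OF z(1)] z c(2) S(7) u'a' by metis
  have ub': "R u b'" using U(12)[OF S(4)] S(6,8) cb' u'a' by metis
  obtain v v' where sv: "rel_swap E F R v v' b' z" using swap_top[OF S(4) z(1)] z(3) S(8) by metis
  note V = rel_swapD[OF sv]
  have va': "v = a'"
  proof (rule ccontr)
    assume ne: "v \<noteq> a'"
    have "a' \<noteq> v'" using V(8) z(3) by auto
    then have "R a' b' \<longleftrightarrow> R a' z" using V(11)[OF S(2)] ne by simp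
    then show False using S(8) z(3) by simp
  qed
  have vu: "v = u"
  proof (rule ccontr)
    assume ne: "v \<noteq> u"
    have "u \<noteq> v'" using V(8) uz by auto
    then have "R u b' \<longleftrightarrow> R u z" using V(11)[OF U(1)] ne by simp
    then show False using ub' uz by simp
  qed
  show False using va' vu u'a' U(5) by simp
qed

lemma pairwise_swappable_perfect_matching:
  assumes sw: "pairwise_swappable E F R" and a0: "a0 \<in> E" "a0' \<in> E" "a0 \<noteq> a0'"
  shows "perfect_matching E F R \<or> perfect_matching E F (\<lambda>x y. \<not> R x y)"
proof -
  obtain b0 b0' where s: "rel_swap E F R a0 a0' b0 b0'"
    using pairwise_swappableD(1)[OF sw a0] by blast
  note S = rel_swapD[OF s]
  show ?thesis
  proof (cases "\<exists>c\<in>F. R a0 c \<and> c \<noteq> b0")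
    case True
    then have cover: "\<forall>z\<in>F. R a0 z \<or> R a0' z"
      using rel_swap_covers[OF sw s] by blast
    have "\<exists>!y. y \<in> F \<and> \<not> R a0 y"
      using S(4,9,7,12) cover by metis
    then show ?thesis
      using perfect_matching_if_unique_neighbour[OF pairwise_swappable_complement[OF sw] a0(1)] by blast
  next
    case False
    then show ?thesis
      using perfect_matching_if_unique_neighbour[OF sw a0(1)] S(3,7) by blast
  qed
qed

lemma rel_swap_along_steps:
  assumes steps: "\<And>x y. step x y \<Longrightarrow> x \<in> E \<Longrightarrow> y \<in> E \<and> (\<exists>b b'. rel_swap E F R x y b b')"
    and path: "step\<^sup>*\<^sup>* a a'" and a: "a \<in> E" "a \<noteq> a'"
  shows "\<exists>b b'. rel_swap E F R a a' b b'"
proof -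
  have "y \<in> E \<and> (y = a \<or> (\<exists>b b'. rel_swap E F R a y b b'))" if "step\<^sup>*\<^sup>* a y" for y
    using that
  proof (induction rule: rtranclp_induct)
    case (step y z)
    then obtain c c' where z: "z \<in> E" and s2: "rel_swap E F R y z c c'"
      using steps by blast
    show ?case
    proof (cases "y = a \<or> z = a")
      case False
      then obtain b b' where "rel_swap E F R a y b b'" using step.IH by blast
      from rel_swap_trans[OF this s2] False show ?thesis using z by blast
    qed (use z s2 in blast)
  qed (use a in blast)
  then show ?thesis using path a(2) by blast
qed

lemma pairwise_swappable_if_connected:
  assumes bottom_steps: "\<And>x y. step x y \<Longrightarrow> x \<in> E \<Longrightarrow> y \<in> E \<and> (\<exists>b b'. rel_swap E F R x y b b')"
    and top_steps: "\<And>x y. step x y \<Longrightarrow> x \<in> F \<Longrightarrow> y \<in> F \<and> (\<exists>a a'. rel_swap E F R a a' x y)"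
    and connected: "\<And>x y. x \<in> E \<Longrightarrow> y \<in> E \<Longrightarrow> step\<^sup>*\<^sup>* x y" "\<And>x y. x \<in> F \<Longrightarrow> y \<in> F \<Longrightarrow> step\<^sup>*\<^sup>* x y"
  shows "pairwise_swappable E F R"
  unfolding pairwise_swappable_def
proof (intro conjI ballI impI)
  show "\<exists>b b'. rel_swap E F R a a' b b'" if "a \<in> E" "a' \<in> E" "a \<noteq> a'" for a a'
    using rel_swap_along_steps[OF bottom_steps connected(1)] that by blast
  fix b b' assume b: "b \<in> F" "b' \<in> F" "b \<noteq> b'"
  have "y \<in> F \<and> (\<exists>a a'. rel_swap F E (\<lambda>y x. R x y) x y a a')" if st: "step x y" "x \<in> F" for x y
  proof -
    obtain a a' where "y \<in> F" and s: "rel_swap E F R a a' x y"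
      using top_steps[OF st] by blast
    then show ?thesis using rel_swap_converse[OF s] by blast
  qed
  from rel_swap_along_steps[OF this connected(2)[OF b(1,2)] b(1,3)]
  obtain a a' where "rel_swap F E (\<lambda>y x. R x y) b b' a a'" by blast
  from rel_swap_converse[OF this] show "\<exists>a a'. rel_swap E F R a a' b b'" by blast
qed

section \<open>Finite posets and their symmetries\<close>

lemma poset_aut_mem: "poset_aut S le \<sigma> \<Longrightarrow> x \<in> S \<Longrightarrow> \<sigma> x \<in> S"
  unfolding poset_aut_def by (metis bij_betw_apply)

lemma poset_aut_inj_iff: "poset_aut S le \<sigma> \<Longrightarrow> x \<in> S \<Longrightarrow> y \<in> S \<Longrightarrow> \<sigma> x = \<sigma> y \<longleftrightarrow> x = y"
  unfolding poset_aut_def bij_betw_def inj_on_def by blast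

lemma poset_aut_le_iff: "poset_aut S le \<sigma> \<Longrightarrow> x \<in> S \<Longrightarrow> y \<in> S \<Longrightarrow> le (\<sigma> x) (\<sigma> y) \<longleftrightarrow> le x y"
  unfolding poset_aut_def by blast

lemma poset_aut_lt_iff:
  assumes "poset_aut S le \<sigma>" "x \<in> S" "y \<in> S"
  shows "lt_of le (\<sigma> x) (\<sigma> y) \<longleftrightarrow> lt_of le x y"
  using poset_aut_le_iff[OF assms] poset_aut_inj_iff[OF assms] unfolding lt_of_def by simp

lemma poset_aut_surj: "poset_aut S le \<sigma> \<Longrightarrow> y \<in> S \<Longrightarrow> \<exists>x\<in>S. \<sigma> x = y"
  unfolding poset_aut_def bij_betw_def by (metis imageE)

lemma support_subset: "support S \<sigma> \<subseteq> S"
  unfolding support_def by blast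

lemma poset_iso_trans:
  assumes "poset_iso A leA B leB" "poset_iso B leB C leC"
  shows "poset_iso A leA C leC"
proof -
  obtain f where f: "bij_betw f A B" "\<forall>a\<in>A. \<forall>b\<in>A. leA a b \<longleftrightarrow> leB (f a) (f b)"
    using assms(1) unfolding poset_iso_def by blast
  obtain g where g: "bij_betw g B C" "\<forall>a\<in>B. \<forall>b\<in>B. leB a b \<longleftrightarrow> leC (g a) (g b)"
    using assms(2) unfolding poset_iso_def by blast
  have "bij_betw (g \<circ> f) A C"
    using f(1) g(1) by (rule bij_betw_trans)
  moreover have "\<forall>a\<in>A. \<forall>b\<in>A. leA a b \<longleftrightarrow> leC ((g \<circ> f) a) ((g \<circ> f) b)"
    using f g bij_betw_apply[OF f(1)] by simp
  ultimately show ?thesis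
    unfolding poset_iso_def by blast
qed

lemma poset_iso_sym:
  assumes "poset_iso A leA B leB"
  shows "poset_iso B leB A leA"
proof -
  obtain f where f: "bij_betw f A B" "\<forall>a\<in>A. \<forall>b\<in>A. leA a b \<longleftrightarrow> leB (f a) (f b)"
    using assms unfolding poset_iso_def by blast
  have "bij_betw (inv_into A f) B A"
    using bij_betw_inv_into[OF f(1)] .
  moreover have "\<forall>p\<in>B. \<forall>q\<in>B. leB p q \<longleftrightarrow> leA (inv_into A f p) (inv_into A f q)"
    using f(2) bij_betw_apply[OF calculation] bij_betw_inv_into_right[OF f(1)] by metis
  ultimately show ?thesis
    unfolding poset_iso_def by blast
qed

lemma card_eq_if_poset_iso: "poset_iso A leA B leB \<Longrightarrow> card A = card B"
  unfolding poset_iso_def using bij_betw_same_card by blast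

lemma card_C2_carrier: "card C2_carrier = 2"
  by (simp add: C2_carrier_def card_UNIV_bool)

lemma poset_iso_C2I:
  assumes "A = {p, q}" "p \<noteq> q" "R p p" "R q q" "R p q" "\<not> R q p"
  shows "poset_iso A R C2_carrier C2_le"
proof -
  have "\<forall>x\<in>A. \<forall>y\<in>A. R x y \<longleftrightarrow> C2_le (x = q) (y = q)"
    using assms unfolding C2_le_def by auto
  moreover have "bij_betw (\<lambda>x. x = q) A C2_carrier"
    unfolding C2_carrier_def
    by (rule bij_betw_byWitness[where f'="\<lambda>t. if t then q else p"]) (use assms in auto)
  ultimately show ?thesis
    unfolding poset_iso_def by blast
qed

lemma finite_chain_cards:
  "finite X \<Longrightarrow> finite {card C |C. C \<subseteq> X \<and> (\<forall>x\<in>C. \<forall>y\<in>C. le x y \<or> le y x)}"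
  by (rule finite_subset[of _ "card ` Pow X"]) auto

lemma chain_len_eqI:
  assumes X: "finite X" and C0: "C0 \<subseteq> X" "\<forall>x\<in>C0. \<forall>y\<in>C0. le x y \<or> le y x"
    and bound: "\<And>C. C \<subseteq> X \<Longrightarrow> \<forall>x\<in>C. \<forall>y\<in>C. le x y \<or> le y x \<Longrightarrow> card C \<le> card C0"
  shows "chain_len le X = card C0"
  unfolding chain_len_def by (rule Max_eqI[OF finite_chain_cards[OF X]]) (use C0 bound in auto)

lemma chain_len_le_card:
  assumes "finite X"
  shows "chain_len le X \<le> card X"
proof -
  have "{} \<subseteq> X" by simp
  then have "{card C |C. C \<subseteq> X \<and> (\<forall>x\<in>C. \<forall>y\<in>C. le x y \<or> le y x)} \<noteq> {}" by blast
  then show ?thesis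
    unfolding chain_len_def using finite_chain_cards[OF assms] assms
    by (auto simp: Max_le_iff intro: card_mono)
qed

text \<open>Every member of a cyclic family contains a longest chain of the support.\<close>
lemma no_smaller_cyc_family:
  assumes "finite (support S \<sigma>)" "0 < r" and "card SQ \<le> chain_len le (support S \<sigma>)"
  shows "\<not> (\<exists>U. cyc_family S le r \<sigma> U \<and> card (U 0) < card SQ)"
proof
  assume "\<exists>U. cyc_family S le r \<sigma> U \<and> card (U 0) < card SQ"
  then obtain U where U: "cyc_family S le r \<sigma> U" "card (U 0) < card SQ" by blast
  have "U 0 \<subseteq> support S \<sigma>" "chain_len le (U 0) = chain_len le (support S \<sigma>)"
    using U(1) \<open>0 < r\<close> unfolding cyc_family_def by auto
  then show False
    using chain_len_le_card[of "U 0" le] finite_subset[OF _ assms(1)] U(2) assms(3) by fastforce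
qed

lemma chain_len_support_le_card:
  assumes g: "generator_fam S le SQ leQ r \<sigma> T" and "finite S"
  shows "chain_len le (support S \<sigma>) \<le> card SQ"
proof -
  have "0 < r" using g unfolding generator_fam_def by simp
  then have T0: "T 0 \<subseteq> support S \<sigma>" "chain_len le (T 0) = chain_len le (support S \<sigma>)"
    "poset_iso (T 0) le SQ leQ"
    using g unfolding generator_fam_def cyc_family_def by auto
  have "finite (T 0)"
    using T0(1) support_subset \<open>finite S\<close> by (metis finite_subset)
  then show ?thesis
    using chain_len_le_card[of "T 0" le] T0(2) card_eq_if_poset_iso[OF T0(3)] by simp
qed

lemma npairs_eq_0:
  assumes "finite B" "card B \<le> 1"
  shows "npairs le B = 0"
proof -
  have "{(a, b). a \<in> B \<and> b \<in> B \<and> lt_of le a b} = {}"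
    using assms unfolding lt_of_def by (auto simp: card_le_Suc0_iff_eq)
  then show ?thesis
    unfolding npairs_def by (metis card.empty)
qed

lemma generator_fam_2I:
  assumes aut: "poset_aut S le \<sigma>" and fin: "finite S"
    and sup: "support S \<sigma> = A \<union> B" and img: "\<sigma> ` A = B" "\<sigma> ` B = A"
    and iso: "poset_iso A le SQ leQ" "poset_iso B le SQ leQ"
    and max: "max_ordered le (A \<union> B) A" "max_ordered le (A \<union> B) B"
    and chains: "chain_len le A = chain_len le (A \<union> B)" "chain_len le B = chain_len le (A \<union> B)"
    and card: "card SQ \<le> chain_len le (A \<union> B)"
  shows "generator_fam S le SQ leQ 2 \<sigma> (\<lambda>i. if i = 0 then A else B)"
proof -
  have "(\<Union>i<2::nat. if i = 0 then A else B) = A \<union> B"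
    by (auto simp: less_2_cases_iff)
  then have "cyc_family S le 2 \<sigma> (\<lambda>i. if i = 0 then A else B)"
    unfolding cyc_family_def using sup img max chains by (simp add: less_2_cases_iff)
  moreover have "finite (support S \<sigma>)"
    using fin support_subset finite_subset by metis
  ultimately show ?thesis
    unfolding generator_fam_def using aut iso card sup no_smaller_cyc_family[of S \<sigma> 2 SQ le]
    by (simp add: less_2_cases_iff)
qed

lemma sym1_via_2I:
  assumes "generator_fam S le SQ leQ 2 \<sigma> (\<lambda>i. if i = 0 then A else B)" "A \<noteq> B" "a \<in> A" "\<sigma> a \<in> B"
  shows "sym1_via S le SQ leQ 2 \<sigma> a (\<sigma> a)"
  unfolding sym1_via_def
  by (rule exI[of _ "\<lambda>i. if i = 0 then A else B"], rule exI[of _ 0], rule exI[of _ 1], rule exI[of _ 1])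
    (use assms in simp)

locale fin_poset =
  fixes S :: "'a set" and le :: "'a \<Rightarrow> 'a \<Rightarrow> bool"
  assumes finite_poset: "finite_poset S le"
begin

lemma finite_carrier: "finite S"
  using finite_poset unfolding finite_poset_def by blast

lemma refl_on_carrier: "a \<in> S \<Longrightarrow> le a a"
  using finite_poset unfolding finite_poset_def by blast

lemma antisym_on_carrier: "a \<in> S \<Longrightarrow> b \<in> S \<Longrightarrow> le a b \<Longrightarrow> le b a \<Longrightarrow> a = b"
  using finite_poset unfolding finite_poset_def by blast

lemma trans_on_carrier: "a \<in> S \<Longrightarrow> b \<in> S \<Longrightarrow> c \<in> S \<Longrightarrow> le a b \<Longrightarrow> le b c \<Longrightarrow> le a c"
  using finite_poset unfolding finite_poset_def by blast

lemma poset_iso_C2_iff: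
  assumes "A \<subseteq> S"
  shows "poset_iso A le C2_carrier C2_le \<longleftrightarrow> (\<exists>p q. A = {p, q} \<and> lt_of le p q)"
proof
  assume "poset_iso A le C2_carrier C2_le"
  then obtain f :: "'a \<Rightarrow> bool"
    where f: "bij_betw f A UNIV" "\<And>a b. a \<in> A \<Longrightarrow> b \<in> A \<Longrightarrow> le a b \<longleftrightarrow> f a \<le> f b"
    unfolding poset_iso_def C2_carrier_def C2_le_def by blast
  obtain p q where pq: "p \<in> A" "f p = False" "q \<in> A" "f q = True"
    using f(1) unfolding bij_betw_def by (metis UNIV_I imageE)
  have "A = {p, q}"
  proof
    show "A \<subseteq> {p, q}"
    proof
      fix x assume x: "x \<in> A"
      have "f x = f p \<or> f x = f q" using pq by (cases "f x") auto
      then show "x \<in> {p, q}" using f(1) x pq unfolding bij_betw_def inj_on_def by blast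
    qed
  qed (use pq in auto)
  moreover have "lt_of le p q"
    using f(2)[OF pq(1,3)] f(2)[OF pq(3,1)] pq unfolding lt_of_def by auto
  ultimately show "\<exists>p q. A = {p, q} \<and> lt_of le p q" by blast
next
  assume "\<exists>p q. A = {p, q} \<and> lt_of le p q"
  then obtain p q where pq: "A = {p, q}" "le p q" "p \<noteq> q"
    unfolding lt_of_def by blast
  then have "p \<in> S" "q \<in> S" using assms by auto
  then show "poset_iso A le C2_carrier C2_le"
    using pq refl_on_carrier antisym_on_carrier by (intro poset_iso_C2I) auto
qed

lemma poset_iso_singleton: "x \<in> S \<Longrightarrow> poset_iso {x} le {True} C2_le"
  unfolding poset_iso_def C2_le_def bij_betw_def by (auto intro!: exI[of _ "\<lambda>_. True"] refl_on_carrier)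

lemma chain_len_ge_2:
  assumes "X \<subseteq> S" "a \<in> X" "b \<in> X" "a \<noteq> b" "le a b"
  shows "2 \<le> chain_len le X"
proof -
  have "finite X" using assms(1) finite_carrier finite_subset by blast
  moreover have "2 \<in> {card C |C. C \<subseteq> X \<and> (\<forall>x\<in>C. \<forall>y\<in>C. le x y \<or> le y x)}"
    using assms refl_on_carrier by (intro CollectI exI[of _ "{a, b}"]) auto
  ultimately show ?thesis
    unfolding chain_len_def by (simp add: finite_chain_cards)
qed

lemma npairs_le_1:
  assumes "card B = 2" "B \<subseteq> S"
  shows "npairs le B \<le> 1"
proof -
  obtain x y where xy: "B = {x, y}" "x \<noteq> y"
    using assms(1) card_2_iff by metis
  have "{(a, b). a \<in> B \<and> b \<in> B \<and> lt_of le a b} \<subseteq> {(x, y)} \<or>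
        {(a, b). a \<in> B \<and> b \<in> B \<and> lt_of le a b} \<subseteq> {(y, x)}"
    using xy assms(2) antisym_on_carrier[of x y] unfolding lt_of_def by auto
  moreover have "card P \<le> 1" if "P \<subseteq> {z}" for P and z :: "'a \<times> 'a"
    using card_mono[OF _ that] by simp
  ultimately show ?thesis
    unfolding npairs_def by blast
qed

lemma npairs_strict_pair: "lt_of le p q \<Longrightarrow> p \<in> S \<Longrightarrow> q \<in> S \<Longrightarrow> npairs le {p, q} = 1"
proof -
  assume "lt_of le p q" "p \<in> S" "q \<in> S"
  then have "{(a, b). a \<in> {p, q} \<and> b \<in> {p, q} \<and> lt_of le a b} = {(p, q)}"
    using antisym_on_carrier[of p q] unfolding lt_of_def by auto
  then show ?thesis
    unfolding npairs_def by simp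
qed

lemma max_ordered_strict_pair:
  assumes "X \<subseteq> S" "p \<in> X" "q \<in> X" "lt_of le p q"
  shows "max_ordered le X {p, q}"
proof -
  have "card {p, q} = 2" using assms(4) unfolding lt_of_def by simp
  then have "npairs le B \<le> npairs le {p, q}" if "B \<subseteq> X" "card B = card {p, q}" for B
  proof -
    have "npairs le B \<le> 1"
      using npairs_le_1 that \<open>card {p, q} = 2\<close> assms(1) by auto
    also have "\<dots> = npairs le {p, q}"
      using npairs_strict_pair[OF assms(4) subsetD[OF assms(1,2)] subsetD[OF assms(1,3)]] by simp
    finally show ?thesis .
  qed
  then show ?thesis
    unfolding max_ordered_def using assms(2,3) by blast
qed

lemma max_ordered_singleton:
  assumes "finite X" "x \<in> X"
  shows "max_ordered le X {x}"
proof -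
  have "npairs le B \<le> npairs le {x}" if "B \<subseteq> X" "card B = card {x}" for B
    using npairs_eq_0[of B le] finite_subset[OF that(1) assms(1)] that(2) by simp
  then show ?thesis
    unfolding max_ordered_def using assms(2) by blast
qed

definition down_card :: "'a \<Rightarrow> nat" where
  "down_card x = card {z\<in>S. le z x}"

lemma down_card_aut:
  assumes \<sigma>: "poset_aut S le \<sigma>" and x: "x \<in> S"
  shows "down_card (\<sigma> x) = down_card x"
proof -
  have "{z\<in>S. le z (\<sigma> x)} = \<sigma> ` {z\<in>S. le z x}"
    using poset_aut_le_iff[OF \<sigma> _ x] poset_aut_mem[OF \<sigma>] poset_aut_surj[OF \<sigma>] by blast
  moreover have "inj_on \<sigma> {z\<in>S. le z x}"
    using poset_aut_inj_iff[OF \<sigma>] unfolding inj_on_def by blast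
  ultimately show ?thesis
    unfolding down_card_def by (simp add: card_image)
qed

lemma down_card_strict_mono:
  assumes "x \<in> S" "y \<in> S" "lt_of le x y"
  shows "down_card x < down_card y"
proof -
  have "{z\<in>S. le z x} \<subset> {z\<in>S. le z y}"
    using assms trans_on_carrier antisym_on_carrier refl_on_carrier unfolding lt_of_def by blast
  then show ?thesis
    unfolding down_card_def by (simp add: finite_carrier psubset_card_mono)
qed

lemma generator_fam_aut: "generator_fam S le SQ leQ r \<sigma> T \<Longrightarrow> poset_aut S le \<sigma>"
  unfolding generator_fam_def by blast

lemma C2_generator_fam_cases:
  assumes g: "generator_fam S le C2_carrier C2_le 2 \<sigma> T"
  obtains p q where "T 0 = {p, q}" "T 1 = {\<sigma> p, \<sigma> q}" "lt_of le p q"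
    "\<sigma> (\<sigma> p) = p" "\<sigma> (\<sigma> q) = q" "support S \<sigma> = {p, q, \<sigma> p, \<sigma> q}"
    "p \<in> S" "q \<in> S" "\<sigma> p \<noteq> p" "\<sigma> q \<noteq> q"
proof -
  have aut: "poset_aut S le \<sigma>" using generator_fam_aut[OF g] .
  have cyc: "cyc_family S le 2 \<sigma> T" "poset_iso (T 0) le C2_carrier C2_le"
    using g unfolding generator_fam_def by auto
  have cyc_i: "T i \<subseteq> support S \<sigma> \<and> \<sigma> ` T i = T (Suc i mod 2)" if "i < 2" for i
    using cyc(1) that unfolding cyc_family_def by blast
  have T: "T 0 \<subseteq> support S \<sigma>" "\<sigma> ` T 0 = T 1" "\<sigma> ` T 1 = T 0"
    using cyc_i[of 0] cyc_i[of 1] by simp_all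
  have "(\<Union>i<2::nat. T i) = support S \<sigma>"
    using cyc(1) unfolding cyc_family_def by blast
  then have sup: "support S \<sigma> = T 0 \<union> T 1"
    by (auto simp: less_2_cases_iff)
  have "T 0 \<subseteq> S" using T(1) support_subset by (rule subset_trans)
  from cyc(2)[unfolded poset_iso_C2_iff[OF this]] obtain p q where pq: "T 0 = {p, q}" "lt_of le p q"
    by blast
  have S: "p \<in> S" "q \<in> S" and moved: "\<sigma> p \<noteq> p" "\<sigma> q \<noteq> q"
    using pq(1) T(1) unfolding support_def by auto
  have T1: "T 1 = {\<sigma> p, \<sigma> q}" using T(2) pq(1) by auto
  have twice: "{\<sigma> (\<sigma> p), \<sigma> (\<sigma> q)} = {p, q}" using T(3) T1 pq(1) by auto
  have "lt_of le (\<sigma> (\<sigma> p)) (\<sigma> (\<sigma> q))"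
    using poset_aut_lt_iff[OF aut poset_aut_mem[OF aut S(1)] poset_aut_mem[OF aut S(2)]]
      poset_aut_lt_iff[OF aut S] pq(2) by simp
  then have "\<not> (\<sigma> (\<sigma> p) = q \<and> \<sigma> (\<sigma> q) = p)"
    using antisym_on_carrier[OF S] pq(2) unfolding lt_of_def by auto
  then have "\<sigma> (\<sigma> p) = p \<and> \<sigma> (\<sigma> q) = q"
    using twice by (auto simp: doubleton_eq_iff)
  then show thesis
    using that pq T1 sup S moved by auto
qed

abbreviation sym_step :: "'a \<Rightarrow> 'a \<Rightarrow> bool" where
  "sym_step \<equiv> sym1_prime S le C2_carrier C2_le 2"

abbreviation sym_rel :: "'a rel" where
  "sym_rel \<equiv> prime_sym_rel S le C2_carrier C2_le 2"

lemma sym1_via_C2: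
  assumes "sym1_via S le C2_carrier C2_le 2 \<sigma> x y"
  shows "\<exists>T. generator_fam S le C2_carrier C2_le 2 \<sigma> T \<and> x \<in> support S \<sigma> \<and> y = \<sigma> x \<and> \<sigma> y = x"
proof -
  obtain T i q where t: "generator_fam S le C2_carrier C2_le 2 \<sigma> T" "i < 2" "x \<in> T i"
      "1 \<le> q" "q < 2" "y = (\<sigma> ^^ q) x"
    using assms unfolding sym1_via_def by blast
  obtain p p' where pp: "T 0 = {p, p'}" "T 1 = {\<sigma> p, \<sigma> p'}" "lt_of le p p'"
      "\<sigma> (\<sigma> p) = p" "\<sigma> (\<sigma> p') = p'" "support S \<sigma> = {p, p', \<sigma> p, \<sigma> p'}"
      "p \<in> S" "p' \<in> S" "\<sigma> p \<noteq> p" "\<sigma> p' \<noteq> p'"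
    by (rule C2_generator_fam_cases[OF t(1)])
  have "x \<in> T 0 \<union> T 1" using t(2,3) by (auto simp: less_2_cases_iff)
  then show ?thesis
    using t pp by (auto simp: less_2_cases_iff)
qed

lemma sym_step_generator:
  assumes "sym_step x y"
  shows "\<exists>\<sigma> T. generator_fam S le C2_carrier C2_le 2 \<sigma> T \<and> x \<in> support S \<sigma> \<and> y = \<sigma> x"
  using assms sym1_via_C2 unfolding sym1_prime_def by blast

lemma sym_step_aut:
  assumes "sym_step x y"
  obtains \<sigma> where "poset_aut S le \<sigma>" "x \<in> S" "y = \<sigma> x" "y \<noteq> x"
proof -
  obtain \<sigma> T where "generator_fam S le C2_carrier C2_le 2 \<sigma> T" "x \<in> support S \<sigma>" "y = \<sigma> x"
    using sym_step_generator[OF assms] by blast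
  with generator_fam_aut that show thesis
    unfolding support_def by blast
qed

lemma sym_step_sym: "sym_step x y \<Longrightarrow> sym_step y x"
proof -
  assume "sym_step x y"
  then obtain A X \<sigma> where prime: "prime_sym_set S le C2_carrier C2_le 2 A X"
      "\<sigma> \<in> sym_gens S le C2_carrier C2_le 2 A" and via: "sym1_via S le C2_carrier C2_le 2 \<sigma> x y"
    unfolding sym1_prime_def by blast
  obtain T i j q where t: "generator_fam S le C2_carrier C2_le 2 \<sigma> T" "i < 2" "j < 2" "T i \<noteq> T j"
      "x \<in> T i" "y \<in> T j"
    using via unfolding sym1_via_def by blast
  have "x = (\<sigma> ^^ 1) y"
    using sym1_via_C2[OF via] by (elim exE conjE) simp
  then have "sym1_via S le C2_carrier C2_le 2 \<sigma> y x"
    unfolding sym1_via_def using t by (intro exI[of _ T] exI[of _ j] exI[of _ i] exI[of _ 1]) auto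
  then show "sym_step y x"
    unfolding sym1_prime_def using prime by blast
qed

lemma sym_rel_iff: "(x, y) \<in> sym_rel \<longleftrightarrow> x \<in> S \<and> y \<in> S \<and> sym_step\<^sup>*\<^sup>* x y"
  unfolding prime_sym_rel_def by simp

lemma equiv_sym_rel: "equiv S sym_rel"
proof -
  have "symp sym_step"
    using sym_step_sym by (rule sympI)
  then have sym: "symp sym_step\<^sup>*\<^sup>*"
    by (rule symp_rtranclp)
  show ?thesis
  proof (rule equivI)
    show "sym_rel \<subseteq> S \<times> S" "refl_on S sym_rel"
      unfolding refl_on_def by (auto simp: sym_rel_iff)
    show "sym sym_rel"
      unfolding sym_def sym_rel_iff using sympD[OF sym] by blast
    show "trans sym_rel"
      unfolding trans_def sym_rel_iff using rtranclp_trans[of sym_step] by blast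
  qed
qed

lemma sym_rel_down_card:
  assumes "(x, y) \<in> sym_rel"
  shows "down_card y = down_card x"
proof -
  have "sym_step\<^sup>*\<^sup>* x y" "x \<in> S" using assms sym_rel_iff by auto
  then show ?thesis
  proof (induction rule: rtranclp_induct)
    case (step y z)
    obtain \<sigma> where "poset_aut S le \<sigma>" "y \<in> S" "z = \<sigma> y"
      using sym_step_aut[OF step(2)] by blast
    then show ?case using step(3,4) down_card_aut by simp
  qed simp
qed

lemma sym_rel_qr_sym:
  assumes "(x, y) \<in> sym_rel"
  shows "qr_sym S le C2_carrier C2_le 2 x y"
proof -
  have "sym_step\<^sup>*\<^sup>* x y" using assms sym_rel_iff by blast
  then show ?thesis
    unfolding qr_sym_def
    by (rule rtranclp_mono[THEN predicate2D, rotated]) (auto simp: sym1_prime_def sym1_def)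
qed

end

section \<open>Bipartite posets\<close>

lemma le_iff_le_if_no_comparable_in_support:
  assumes aut: "poset_aut S le \<sigma>"
    and none: "\<And>u v. u \<in> support S \<sigma> \<Longrightarrow> v \<in> support S \<sigma> \<Longrightarrow> le u v \<Longrightarrow> u = v"
    and x: "x \<in> S" "\<sigma> x \<noteq> x" and y: "y \<in> S" "y \<noteq> x" "y \<noteq> \<sigma> x"
  shows "le x y \<longleftrightarrow> le (\<sigma> x) y"
proof -
  have fixed: "\<sigma> z = z" if z: "z \<in> S" "z \<noteq> x" "le x z" for z
  proof (rule ccontr)
    assume "\<sigma> z \<noteq> z"
    then have "z \<in> support S \<sigma>" "x \<in> support S \<sigma>"
      using z(1) x unfolding support_def by auto
    then show False using none[of x z] z(2,3) by simp
  qed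
  obtain y' where y': "y' \<in> S" "\<sigma> y' = y"
    using poset_aut_surj[OF aut y(1)] by blast
  show ?thesis
  proof
    assume "le x y"
    then show "le (\<sigma> x) y"
      using fixed[OF y(1,2)] poset_aut_le_iff[OF aut x(1) y(1)] by simp
  next
    assume "le (\<sigma> x) y"
    then have "le x y'" using y' poset_aut_le_iff[OF aut x(1) y'(1)] by simp
    moreover have "y' \<noteq> x" using y' y(3) by blast
    ultimately show "le x y" using fixed[OF y'(1)] y'(2) by simp
  qed
qed

lemma poset_aut_converse: "poset_aut S le \<sigma> \<Longrightarrow> poset_aut S (\<lambda>x y. le y x) \<sigma>"
  unfolding poset_aut_def by blast

locale bipartite_poset = fin_poset +
  fixes E F :: "'a set"
  assumes carrier_split: "S = E \<union> F" and sides_disjoint: "E \<inter> F = {}"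
    and lt_from_bottom_to_top: "\<And>x y. x \<in> S \<Longrightarrow> y \<in> S \<Longrightarrow> lt_of le x y \<Longrightarrow> x \<in> E \<and> y \<in> F"
begin

lemma bottom_subset: "E \<subseteq> S" and top_subset: "F \<subseteq> S"
  using carrier_split by auto

lemma le_bipartite_iff: "x \<in> S \<Longrightarrow> y \<in> S \<Longrightarrow> le x y \<longleftrightarrow> x = y \<or> (x \<in> E \<and> y \<in> F \<and> le x y)"
  using refl_on_carrier lt_from_bottom_to_top unfolding lt_of_def by blast

lemma le_bottom_bottom: "x \<in> E \<Longrightarrow> y \<in> E \<Longrightarrow> le x y \<Longrightarrow> x = y"
  using lt_from_bottom_to_top bottom_subset sides_disjoint unfolding lt_of_def by blast

lemma le_top_top: "x \<in> F \<Longrightarrow> y \<in> F \<Longrightarrow> le x y \<Longrightarrow> x = y"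
  using lt_from_bottom_to_top top_subset sides_disjoint unfolding lt_of_def by blast

lemma not_le_top_bottom: "x \<in> F \<Longrightarrow> y \<in> E \<Longrightarrow> \<not> le x y"
  using lt_from_bottom_to_top bottom_subset top_subset sides_disjoint unfolding lt_of_def by blast

lemma chain_card_le_2:
  assumes C: "C \<subseteq> S" "\<forall>x\<in>C. \<forall>y\<in>C. le x y \<or> le y x"
  shows "card C \<le> 2"
proof -
  have fin: "finite C" using C(1) finite_carrier finite_subset by blast
  have "card (C \<inter> E) \<le> 1"
    using C(2) le_bottom_bottom fin by (auto simp: card_le_Suc0_iff_eq)
  moreover have "card (C \<inter> F) \<le> 1"
    using C(2) le_top_top fin by (auto simp: card_le_Suc0_iff_eq)
  moreover have "C = (C \<inter> E) \<union> (C \<inter> F)"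
    using C(1) carrier_split by blast
  then have "card C \<le> card (C \<inter> E) + card (C \<inter> F)"
    by (metis card_Un_le)
  ultimately show ?thesis by linarith
qed

lemma chain_len_strict_pair:
  assumes "X \<subseteq> S" "a \<in> X" "b \<in> X" "lt_of le a b"
  shows "chain_len le X = 2"
proof -
  have ab: "le a b" "a \<noteq> b" using assms(4) unfolding lt_of_def by auto
  have "chain_len le X = card {a, b}"
  proof (rule chain_len_eqI)
    show "finite X" using assms(1) finite_carrier finite_subset by blast
    show "card C \<le> card {a, b}" if "C \<subseteq> X" "\<forall>x\<in>C. \<forall>y\<in>C. le x y \<or> le y x" for C
      using chain_card_le_2[OF subset_trans[OF that(1) assms(1)] that(2)] ab(2) by simp
  qed (use assms(1-3) ab refl_on_carrier in auto)
  then show ?thesis using assms(4) unfolding lt_of_def by simp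
qed

lemma chain_len_antichain:
  assumes "X \<subseteq> S" "a \<in> X" "\<forall>x\<in>X. \<forall>y\<in>X. le x y \<longrightarrow> x = y"
  shows "chain_len le X = 1"
proof -
  have "chain_len le X = card {a}"
  proof (rule chain_len_eqI)
    show "finite X" using assms(1) finite_carrier finite_subset by blast
    show "card C \<le> card {a}" if "C \<subseteq> X" "\<forall>x\<in>C. \<forall>y\<in>C. le x y \<or> le y x" for C
      using that assms(3) \<open>finite X\<close> finite_subset by (fastforce simp: card_le_Suc0_iff_eq)
  qed (use assms refl_on_carrier in auto)
  then show ?thesis by simp
qed

lemma aut_if_involution_preserving_sides:
  assumes inv: "\<And>x. \<sigma> (\<sigma> x) = x" and sides: "\<sigma> ` E \<subseteq> E" "\<sigma> ` F \<subseteq> F"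
    and outside: "\<And>x. x \<notin> S \<Longrightarrow> \<sigma> x = x"
    and le: "\<And>x y. x \<in> E \<Longrightarrow> y \<in> F \<Longrightarrow> le (\<sigma> x) (\<sigma> y) \<longleftrightarrow> le x y"
  shows "poset_aut S le \<sigma>"
proof -
  have mem: "\<sigma> x \<in> S \<longleftrightarrow> x \<in> S" "\<sigma> x \<in> E \<longleftrightarrow> x \<in> E" "\<sigma> x \<in> F \<longleftrightarrow> x \<in> F" for x
    using sides inv carrier_split by (metis Un_iff image_subset_iff)+
  have "bij_betw \<sigma> S S"
    by (rule bij_betw_byWitness[of S \<sigma> \<sigma>]) (use inv mem in auto)
  moreover have "le x y \<longleftrightarrow> le (\<sigma> x) (\<sigma> y)" if "x \<in> S" "y \<in> S" for x y
    using le_bipartite_iff[OF that] le_bipartite_iff[of "\<sigma> x" "\<sigma> y"] mem that le inv by metis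
  ultimately show ?thesis
    unfolding poset_aut_def using outside by blast
qed

lemma rel_swap_aut:
  assumes s: "rel_swap E F le a a' b b'"
  shows "poset_aut S le (transpose a a' \<circ> transpose b b')"
proof -
  note R = rel_swapD[OF s]
  have E: "(transpose a a' \<circ> transpose b b') x = transpose a a' x" if "x \<in> E" for x
    using that R(3,4) sides_disjoint by (auto simp: transpose_def)
  have F: "(transpose a a' \<circ> transpose b b') y = transpose b b' y" if "y \<in> F" for y
    using that R(1,2,3,4) sides_disjoint by (auto simp: transpose_def)
  show ?thesis
  proof (rule aut_if_involution_preserving_sides)
    show "(transpose a a' \<circ> transpose b b') ((transpose a a' \<circ> transpose b b') x) = x" for x
      using R(1-4) sides_disjoint by (auto simp: transpose_def)
    show "(transpose a a' \<circ> transpose b b') ` E \<subseteq> E" "(transpose a a' \<circ> transpose b b') ` F \<subseteq> F"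
      using E F R(1-4) transpose_mem by auto
    show "(transpose a a' \<circ> transpose b b') x = x" if "x \<notin> S" for x
      using that R(1-4) carrier_split by (auto simp: transpose_def)
    show "le ((transpose a a' \<circ> transpose b b') x) ((transpose a a' \<circ> transpose b b') y) \<longleftrightarrow> le x y"
      if "x \<in> E" "y \<in> F" for x y
      using that E F R(13) by simp
  qed
qed

lemma rel_swap_support:
  assumes s: "rel_swap E F le a a' b b'"
  shows "support S (transpose a a' \<circ> transpose b b') = {a, b} \<union> {a', b'}"
  using rel_swapD(1-6)[OF s] sides_disjoint carrier_split
  unfolding support_def by (auto simp: transpose_def)

lemma rel_swap_generator:
  assumes s: "rel_swap E F le a a' b b'"
  shows "generator_fam S le C2_carrier C2_le 2 (transpose a a' \<circ> transpose b b')
           (\<lambda>i. if i = 0 then {a, b} else {a', b'})"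
proof -
  note R = rel_swapD[OF s]
  have lt: "lt_of le a b" "lt_of le a' b'" and S: "a \<in> S" "b \<in> S" "a' \<in> S" "b' \<in> S"
    using R(1-8) sides_disjoint carrier_split unfolding lt_of_def by auto
  have sub: "{a, b} \<union> {a', b'} \<subseteq> S" using S by auto
  have chain: "chain_len le ({a, b} \<union> {a', b'}) = 2"
    using chain_len_strict_pair[OF sub _ _ lt(1)] by simp
  show ?thesis
  proof (rule generator_fam_2I)
    show "poset_aut S le (transpose a a' \<circ> transpose b b')" using rel_swap_aut[OF s] .
    show "finite S" by (rule finite_carrier)
    show "support S (transpose a a' \<circ> transpose b b') = {a, b} \<union> {a', b'}" using rel_swap_support[OF s] .
    show "(transpose a a' \<circ> transpose b b') ` {a, b} = {a', b'}"
      "(transpose a a' \<circ> transpose b b') ` {a', b'} = {a, b}"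
      using R(1-6) sides_disjoint by (auto simp: transpose_def)
    show "poset_iso {a, b} le C2_carrier C2_le" "poset_iso {a', b'} le C2_carrier C2_le"
      using poset_iso_C2_iff[of "{a, b}"] poset_iso_C2_iff[of "{a', b'}"] lt S by auto
    show "max_ordered le ({a, b} \<union> {a', b'}) {a, b}" "max_ordered le ({a, b} \<union> {a', b'}) {a', b'}"
      using max_ordered_strict_pair[OF sub] lt by auto
    show "chain_len le {a, b} = chain_len le ({a, b} \<union> {a', b'})"
      "chain_len le {a', b'} = chain_len le ({a, b} \<union> {a', b'})"
      using chain chain_len_strict_pair[of "{a, b}" a b] chain_len_strict_pair[of "{a', b'}" a' b'] lt S
      by auto
    show "card C2_carrier \<le> chain_len le ({a, b} \<union> {a', b'})"
      using chain card_C2_carrier by simp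
  qed
qed

lemma rel_swap_sym1_via:
  assumes s: "rel_swap E F le a a' b b'"
  shows "sym1_via S le C2_carrier C2_le 2 (transpose a a' \<circ> transpose b b') a a'"
    and "sym1_via S le C2_carrier C2_le 2 (transpose a a' \<circ> transpose b b') b b'"
proof -
  note R = rel_swapD[OF s]
  have ne: "{a, b} \<noteq> {a', b'}" using R(1-6) sides_disjoint by auto
  have val: "(transpose a a' \<circ> transpose b b') a = a'" "(transpose a a' \<circ> transpose b b') b = b'"
    using R(1-6) sides_disjoint by (auto simp: transpose_def)
  show "sym1_via S le C2_carrier C2_le 2 (transpose a a' \<circ> transpose b b') a a'"
    using sym1_via_2I[OF rel_swap_generator[OF s] ne, of a] val by simp
  show "sym1_via S le C2_carrier C2_le 2 (transpose a a' \<circ> transpose b b') b b'"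
    using sym1_via_2I[OF rel_swap_generator[OF s] ne, of b] val by simp
qed

lemma twin_generator:
  assumes a: "a \<in> E" "a' \<in> E" "a \<noteq> a'" and twins: "\<And>y. y \<in> F \<Longrightarrow> le a y \<longleftrightarrow> le a' y"
  shows "generator_fam S le {True} C2_le 2 (transpose a a') (\<lambda>i. if i = 0 then {a} else {a'})"
proof -
  have S: "a \<in> S" "a' \<in> S" using a bottom_subset by auto
  have top_fixed: "transpose a a' y = y" if "y \<in> F" for y
    using that a(1,2) sides_disjoint by (intro transpose_apply_other) auto
  have aut: "poset_aut S le (transpose a a')"
  proof (rule aut_if_involution_preserving_sides)
    show "transpose a a' ` E \<subseteq> E" using a(1,2) by (auto intro: transpose_mem)
    show "transpose a a' ` F \<subseteq> F" using top_fixed by auto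
    show "transpose a a' x = x" if "x \<notin> S" for x using that S by (intro transpose_apply_other) auto
    show "le (transpose a a' x) (transpose a a' y) \<longleftrightarrow> le x y" if "x \<in> E" "y \<in> F" for x y
    proof -
      consider "x = a" | "x = a'" | "x \<noteq> a" "x \<noteq> a'" by blast
      then show ?thesis
        using top_fixed[OF that(2)] twins[OF that(2)] by cases simp_all
    qed
  qed simp
  have sup: "support S (transpose a a') = {a} \<union> {a'}"
    using S a(3) unfolding support_def by (auto simp: transpose_def)
  have anti: "\<forall>x\<in>{a} \<union> {a'}. \<forall>y\<in>{a} \<union> {a'}. le x y \<longrightarrow> x = y"
    using le_bottom_bottom[OF a(1,2)] le_bottom_bottom[OF a(2,1)] by auto
  have chains: "chain_len le ({a} \<union> {a'}) = 1" "chain_len le {a} = 1" "chain_len le {a'} = 1"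
    by (rule chain_len_antichain; use S anti in blast)+
  show ?thesis
  proof (rule generator_fam_2I[OF aut finite_carrier sup])
    show "poset_iso {a} le {True} C2_le" "poset_iso {a'} le {True} C2_le"
      using poset_iso_singleton S by auto
    show "max_ordered le ({a} \<union> {a'}) {a}" "max_ordered le ({a} \<union> {a'}) {a'}"
      using max_ordered_singleton[of "{a} \<union> {a'}"] by simp_all
    show "transpose a a' ` {a} = {a'}" "transpose a a' ` {a'} = {a}"
      by simp_all
  qed (use chains in simp_all)
qed

lemma twin_sym1_via:
  assumes a: "a \<in> E" "a' \<in> E" "a \<noteq> a'" and twins: "\<And>y. y \<in> F \<Longrightarrow> le a y \<longleftrightarrow> le a' y"
  shows "sym1_via S le {True} C2_le 2 (transpose a a') a a'"
  using sym1_via_2I[OF twin_generator[OF assms], of a] a(3) by simp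

text \<open>Without twins, the two strict pairs exchanged by a \<open>(C\<^sub>2, 2)\<close>-generator cannot be joined
  crosswise, so the generator is a swap.\<close>
lemma C2_generator_rel_swap:
  assumes tf: "twin_free E F le" and g: "generator_fam S le C2_carrier C2_le 2 \<sigma> T"
  obtains p q where "rel_swap E F le p (\<sigma> p) q (\<sigma> q)" "support S \<sigma> = {p, q, \<sigma> p, \<sigma> q}"
    "\<sigma> (\<sigma> p) = p" "\<sigma> (\<sigma> q) = q"
proof -
  have aut: "poset_aut S le \<sigma>" using generator_fam_aut[OF g] .
  obtain p q where "T 0 = {p, q}" "T 1 = {\<sigma> p, \<sigma> q}" and pq: "lt_of le p q"
      "\<sigma> (\<sigma> p) = p" "\<sigma> (\<sigma> q) = q" "support S \<sigma> = {p, q, \<sigma> p, \<sigma> q}"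
      "p \<in> S" "q \<in> S" "\<sigma> p \<noteq> p" "\<sigma> q \<noteq> q"
    by (rule C2_generator_fam_cases[OF g])
  have S': "\<sigma> p \<in> S" "\<sigma> q \<in> S" using poset_aut_mem[OF aut] pq(5,6) by auto
  have sides: "p \<in> E" "q \<in> F" "\<sigma> p \<in> E" "\<sigma> q \<in> F"
    using lt_from_bottom_to_top[OF pq(5,6,1)] lt_from_bottom_to_top[OF S']
      poset_aut_lt_iff[OF aut pq(5,6)] pq(1) by auto
  have fixed: "\<sigma> x = x" if "x \<in> S" "x \<notin> {p, q, \<sigma> p, \<sigma> q}" for x
    using that pq(4) unfolding support_def by blast
  have on_E: "\<sigma> x = transpose p (\<sigma> p) x" if "x \<in> E" for x
    using that fixed[of x] sides sides_disjoint bottom_subset pq(2,7)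
    by (cases "x = p \<or> x = \<sigma> p") (auto simp: transpose_def)
  have on_F: "\<sigma> y = transpose q (\<sigma> q) y" if "y \<in> F" for y
    using that fixed[of y] sides sides_disjoint top_subset pq(3,8)
    by (cases "y = q \<or> y = \<sigma> q") (auto simp: transpose_def)
  have preserve: "le (transpose p (\<sigma> p) x) (transpose q (\<sigma> q) y) \<longleftrightarrow> le x y" if "x \<in> E" "y \<in> F" for x y
    using poset_aut_le_iff[OF aut, of x y] that bottom_subset top_subset on_E[OF that(1)] on_F[OF that(2)]
    by auto
  have "\<not> le p (\<sigma> q)"
  proof
    assume le: "le p (\<sigma> q)"
    have "le p y \<longleftrightarrow> le (\<sigma> p) y" if "y \<in> F" for y
    proof (cases "y = q \<or> y = \<sigma> q")
      case True
      then show ?thesis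
        using le pq(1,3) preserve[OF sides(1) sides(4)] preserve[OF sides(1,2)] sides
        unfolding lt_of_def by auto
    next
      case False
      then show ?thesis using preserve[OF sides(1) that] by simp
    qed
    then show False
      using tf sides(1,3) pq(7) unfolding twin_free_def by metis
  qed
  then have "rel_swap E F le p (\<sigma> p) q (\<sigma> q)"
    unfolding rel_swap_def using sides pq(1,7,8) preserve unfolding lt_of_def by auto
  then show thesis
    using that pq(2-4) by blast
qed

lemma sym_step_rel_swap:
  assumes tf: "twin_free E F le" and step: "sym_step x y"
  shows "(\<exists>b b'. rel_swap E F le x y b b') \<or> (\<exists>a a'. rel_swap E F le a a' x y)"
proof -
  obtain \<sigma> T where g: "generator_fam S le C2_carrier C2_le 2 \<sigma> T" and x: "x \<in> support S \<sigma>"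
    and y: "y = \<sigma> x"
    using sym_step_generator[OF step] by blast
  obtain p q where s: "rel_swap E F le p (\<sigma> p) q (\<sigma> q)" "support S \<sigma> = {p, q, \<sigma> p, \<sigma> q}"
    "\<sigma> (\<sigma> p) = p" "\<sigma> (\<sigma> q) = q"
    by (rule C2_generator_rel_swap[OF tf g])
  consider "x = p" | "x = \<sigma> p" | "x = q" | "x = \<sigma> q" using x s(2) by blast
  then show ?thesis
    using s(1) rel_swap_commute[OF s(1)] s(3,4) y by cases auto
qed

text \<open>The isomorphism sends a bottom element \<open>x\<close> to \<open>(g x, False)\<close> and a top element \<open>y\<close> to
  \<open>(g (\<pi>\<inverse> y), True)\<close>.\<close>
lemma poset_iso_grid:
  fixes K :: "nat \<Rightarrow> nat \<Rightarrow> bool" and tle :: "nat \<times> bool \<Rightarrow> nat \<times> bool \<Rightarrow> bool"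
  assumes \<pi>: "bij_betw \<pi> E F" and g: "bij_betw g E {..<n}"
    and K: "\<And>x x'. x \<in> E \<Longrightarrow> x' \<in> E \<Longrightarrow> le x (\<pi> x') \<longleftrightarrow> K (g x) (g x')"
    and tle: "\<And>p q. p \<in> {..<n} \<times> UNIV \<Longrightarrow> q \<in> {..<n} \<times> UNIV \<Longrightarrow>
               tle p q \<longleftrightarrow> p = q \<or> (\<not> snd p \<and> snd q \<and> K (fst p) (fst q))"
  shows "poset_iso S le ({..<n} \<times> UNIV) tle"
proof -
  let ?\<pi>' = "inv_into E \<pi>" and ?g' = "inv_into E g"
  have \<pi>': "\<And>y. y \<in> F \<Longrightarrow> ?\<pi>' y \<in> E" "\<And>y. y \<in> F \<Longrightarrow> \<pi> (?\<pi>' y) = y"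
    "\<And>x. x \<in> E \<Longrightarrow> ?\<pi>' (\<pi> x) = x" "\<And>x. x \<in> E \<Longrightarrow> \<pi> x \<in> F"
    using \<pi> by (auto simp: bij_betw_inv_into_left bij_betw_inv_into_right bij_betw_apply
        bij_betw_imp_surj_on inv_into_into)
  have g': "\<And>i. i < n \<Longrightarrow> ?g' i \<in> E" "\<And>i. i < n \<Longrightarrow> g (?g' i) = i"
    "\<And>x. x \<in> E \<Longrightarrow> ?g' (g x) = x"
    using g by (auto simp: bij_betw_inv_into_left bij_betw_inv_into_right
        bij_betw_imp_surj_on inv_into_into)
  have g_less: "\<And>x. x \<in> E \<Longrightarrow> g x < n"
    using bij_betwE[OF g] by blast
  let ?\<phi> = "\<lambda>x. if x \<in> E then (g x, False) else (g (?\<pi>' x), True)"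
  let ?\<psi> = "\<lambda>p. if snd p then \<pi> (?g' (fst p)) else ?g' (fst p)"
  have bij: "bij_betw ?\<phi> S ({..<n} \<times> UNIV)"
  proof (rule bij_betw_byWitness[where f'="?\<psi>"])
    show "\<forall>x\<in>S. ?\<psi> (?\<phi> x) = x"
      using carrier_split g'(3) \<pi>'(1,2) by auto
    show "\<forall>p\<in>{..<n} \<times> UNIV. ?\<phi> (?\<psi> p) = p"
      using g' g_less \<pi>'(3,4) sides_disjoint by (auto simp: disjoint_iff)
    show "?\<phi> ` S \<subseteq> {..<n} \<times> UNIV"
      using g_less \<pi>'(1) carrier_split by auto
    show "?\<psi> ` ({..<n} \<times> UNIV) \<subseteq> S"
      using g'(1) \<pi>'(4) carrier_split by auto
  qed
  have "le x y \<longleftrightarrow> tle (?\<phi> x) (?\<phi> y)" if xy: "x \<in> S" "y \<in> S" for x y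
  proof -
    have "?\<phi> x \<in> {..<n} \<times> UNIV" "?\<phi> y \<in> {..<n} \<times> UNIV" "?\<phi> x = ?\<phi> y \<longleftrightarrow> x = y"
      using bij xy unfolding bij_betw_def inj_on_def by auto
    then have "tle (?\<phi> x) (?\<phi> y) \<longleftrightarrow> x = y \<or> (x \<in> E \<and> y \<notin> E \<and> K (g x) (g (?\<pi>' y)))"
      using tle by auto
    moreover have "le x y \<longleftrightarrow> K (g x) (g (?\<pi>' y))" if "x \<in> E" "y \<in> F"
      using K[OF that(1) \<pi>'(1)[OF that(2)]] \<pi>'(2)[OF that(2)] by simp
    ultimately show ?thesis
      using le_bipartite_iff[OF xy] xy carrier_split sides_disjoint by blast
  qed
  then show ?thesis
    unfolding poset_iso_def using bij by blast
qed

lemma bij_betw_bottom_index: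
  obtains g where "bij_betw g E {..<card E}"
  using ex_bij_betw_finite_nat[OF finite_subset[OF bottom_subset finite_carrier]]
  by (auto simp: atLeast0LessThan)

lemma poset_iso_parC2_if_perfect_matching:
  assumes "perfect_matching E F le"
  shows "poset_iso S le (parC2_carrier (card E)) parC2_le"
proof -
  obtain \<pi> where \<pi>: "bij_betw \<pi> E F" "\<forall>x\<in>E. \<forall>y\<in>F. le x y \<longleftrightarrow> y = \<pi> x"
    using assms unfolding perfect_matching_iff_bij_betw by blast
  obtain g where g: "bij_betw g E {..<card E}" by (rule bij_betw_bottom_index)
  have "le x (\<pi> x') \<longleftrightarrow> g x = g x'" if "x \<in> E" "x' \<in> E" for x x'
    using \<pi> g that bij_betw_apply[OF \<pi>(1)] unfolding bij_betw_def inj_on_def by metis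
  then show ?thesis
    unfolding parC2_carrier_def
    by (rule poset_iso_grid[OF \<pi>(1) g]) (auto simp: parC2_le_def prod_eq_iff)
qed

lemma poset_iso_crown_if_perfect_matching_complement:
  assumes "perfect_matching E F (\<lambda>x y. \<not> le x y)"
  shows "poset_iso S le (crown_carrier (card E)) crown_le"
proof -
  obtain \<pi> where \<pi>: "bij_betw \<pi> E F" "\<forall>x\<in>E. \<forall>y\<in>F. \<not> le x y \<longleftrightarrow> y = \<pi> x"
    using assms unfolding perfect_matching_iff_bij_betw by blast
  obtain g where g: "bij_betw g E {..<card E}" by (rule bij_betw_bottom_index)
  have "le x (\<pi> x') \<longleftrightarrow> g x \<noteq> g x'" if "x \<in> E" "x' \<in> E" for x x'
    using \<pi> g that bij_betw_apply[OF \<pi>(1)] unfolding bij_betw_def inj_on_def by metis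
  then show ?thesis
    unfolding crown_carrier_def
    by (rule poset_iso_grid[OF \<pi>(1) g]) (auto simp: crown_le_def)
qed

lemma bottom_iff_down_card:
  assumes below: "\<forall>y\<in>F. \<exists>x\<in>E. le x y" and z: "z \<in> S"
  shows "z \<in> E \<longleftrightarrow> down_card z = 1"
proof (cases "z \<in> E")
  case True
  then have "{w\<in>S. le w z} = {z}"
    using carrier_split le_bottom_bottom not_le_top_bottom refl_on_carrier z by blast
  then show ?thesis using True unfolding down_card_def by simp
next
  case False
  then have "z \<in> F" using z carrier_split by blast
  then obtain x where x: "x \<in> E" "le x z" using below by blast
  then have "{x, z} \<subseteq> {w\<in>S. le w z}" "x \<noteq> z"
    using z bottom_subset refl_on_carrier False by auto
  then have "2 \<le> down_card z"
    unfolding down_card_def using card_mono[OF _ \<open>{x, z} \<subseteq> _\<close>] finite_carrier by fastforce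
  then show ?thesis using False by simp
qed

text \<open>An automorphism moving no comparable pair would turn a moved element into a twin of its image.\<close>
lemma aut_moves_comparable_pair:
  assumes tfE: "twin_free E F le" and tfF: "twin_free F E (\<lambda>y x. le x y)"
    and below: "\<forall>y\<in>F. \<exists>x\<in>E. le x y"
    and aut: "poset_aut S le \<sigma>" and x: "x \<in> S" "\<sigma> x \<noteq> x"
  obtains u v where "u \<in> support S \<sigma>" "v \<in> support S \<sigma>" "u \<noteq> v" "le u v"
proof (rule ccontr)
  assume "\<not> thesis"
  then have none: "\<And>u v. u \<in> support S \<sigma> \<Longrightarrow> v \<in> support S \<sigma> \<Longrightarrow> le u v \<Longrightarrow> u = v"
    using that by blast
  have none': "\<And>u v. u \<in> support S \<sigma> \<Longrightarrow> v \<in> support S \<sigma> \<Longrightarrow> le v u \<Longrightarrow> u = v"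
    using none by force
  have \<sigma>x: "\<sigma> x \<in> S" using poset_aut_mem[OF aut x(1)] .
  have same_side: "\<sigma> x \<in> E \<longleftrightarrow> x \<in> E"
    using bottom_iff_down_card[OF below] down_card_aut[OF aut x(1)] x(1) \<sigma>x by simp
  show False
  proof (cases "x \<in> E")
    case True
    have "le x y \<longleftrightarrow> le (\<sigma> x) y" if "y \<in> F" for y
      using le_iff_le_if_no_comparable_in_support[OF aut none x] that True same_side
        top_subset sides_disjoint by blast
    then show False
      using tfE True same_side x(2) unfolding twin_free_def by metis
  next
    case False
    then have xF: "x \<in> F" "\<sigma> x \<in> F" using same_side x(1) \<sigma>x carrier_split by auto
    have "le y x \<longleftrightarrow> le y (\<sigma> x)" if "y \<in> E" for y
      using le_iff_le_if_no_comparable_in_support[OF poset_aut_converse[OF aut] none' x] that xF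
        bottom_subset sides_disjoint by blast
    then show False
      using tfF xF x(2) unfolding twin_free_def by metis
  qed
qed

end

section \<open>Posets whose prime retract is a 2-chain\<close>

context fin_poset
begin

lemma sym_rel_if_same_class:
  assumes "X \<in> S // sym_rel" "x \<in> X" "y \<in> X"
  shows "(x, y) \<in> sym_rel"
  using in_quotient_imp_in_rel[OF equiv_sym_rel assms(1)] assms(2,3) by simp

lemma retract_C2_bipartite:
  assumes iso: "poset_iso (S // sym_rel) (quot_le le) C2_carrier C2_le"
  obtains E F where "S // sym_rel = {E, F}" "quot_le le E F" "bipartite_poset S le E F"
proof -
  obtain f :: "'a set \<Rightarrow> bool" where f: "bij_betw f (S // sym_rel) UNIV"
      "\<And>X Y. X \<in> S // sym_rel \<Longrightarrow> Y \<in> S // sym_rel \<Longrightarrow> quot_le le X Y \<longleftrightarrow> f X \<le> f Y"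
    using iso unfolding poset_iso_def C2_carrier_def C2_le_def by blast
  obtain E F where E: "E \<in> S // sym_rel" "f E = False" and F: "F \<in> S // sym_rel" "f F = True"
    using f(1) unfolding bij_betw_def by (metis UNIV_I imageE)
  have classes: "S // sym_rel = {E, F}"
  proof
    show "S // sym_rel \<subseteq> {E, F}"
    proof
      fix X assume X: "X \<in> S // sym_rel"
      have "f X = f E \<or> f X = f F" using E F by (cases "f X") auto
      then show "X \<in> {E, F}" using f(1) X E F unfolding bij_betw_def inj_on_def by blast
    qed
  qed (use E F in auto)
  have EF: "quot_le le E F" "\<not> quot_le le F E"
    using f(2)[OF E(1) F(1)] f(2)[OF F(1) E(1)] E F by auto
  have split: "S = E \<union> F" using Union_quotient[OF equiv_sym_rel] classes by auto
  have disjoint: "E \<inter> F = {}"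
    using quotient_disj[OF equiv_sym_rel E(1) F(1)] E F by auto
  have same_class_antichain: "\<not> lt_of le x y" if X: "X \<in> S // sym_rel" "x \<in> X" "y \<in> X" for X x y
  proof
    assume "lt_of le x y"
    moreover have "(x, y) \<in> sym_rel"
      using sym_rel_if_same_class[OF X] .
    moreover have "x \<in> S" "y \<in> S"
      using X in_quotient_imp_subset[OF equiv_sym_rel] by blast+
    ultimately show False
      using down_card_strict_mono[of x y] sym_rel_down_card[of x y] by simp
  qed
  have "bipartite_poset S le E F"
  proof
    fix x y assume xy: "x \<in> S" "y \<in> S" "lt_of le x y"
    have "\<not> (x \<in> F \<and> y \<in> E)"
      using EF(2) xy(3) unfolding quot_le_def lt_of_def by blast
    moreover have "\<not> (x \<in> E \<and> y \<in> E)" "\<not> (x \<in> F \<and> y \<in> F)"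
      using same_class_antichain[OF E(1)] same_class_antichain[OF F(1)] xy(3) by blast+
    ultimately show "x \<in> E \<and> y \<in> F"
      using xy(1,2) split by blast
  qed (fact split disjoint)+
  then show thesis
    using that classes EF(1) by blast
qed

lemma moved_by_C2_generator:
  assumes "(x, x') \<in> sym_rel" "x' \<noteq> x"
  obtains \<sigma> where "generator S le C2_carrier C2_le 2 \<sigma>" "\<sigma> x \<noteq> x"
proof -
  have "sym_step\<^sup>*\<^sup>* x x'" using assms(1) sym_rel_iff by blast
  then obtain z where "sym_step x z"
    using assms(2) by (cases rule: converse_rtranclpE) auto
  from sym_step_generator[OF this] obtain \<sigma> T
    where "generator_fam S le C2_carrier C2_le 2 \<sigma> T" "x \<in> support S \<sigma>"
    by blast
  then show thesis
    using that unfolding generator_def support_def by blast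
qed

text \<open>Since \<open>A\<close> meets every class, every \<open>(C\<^sub>2, 2)\<close>-generator belongs to \<open>sym_gens\<close> of \<open>A\<close>.\<close>
lemma sym_set_of_eq_carrier:
  assumes meets: "\<forall>b\<in>S. \<exists>a\<in>A. (a, b) \<in> sym_rel"
    and nontrivial: "\<forall>x\<in>S. \<exists>x'. (x, x') \<in> sym_rel \<and> x' \<noteq> x"
  shows "sym_set_of S le C2_carrier C2_le 2 A = S"
proof
  show "S \<subseteq> sym_set_of S le C2_carrier C2_le 2 A"
  proof
    fix x assume x: "x \<in> S"
    obtain x' where "(x, x') \<in> sym_rel" "x' \<noteq> x"
      using nontrivial x by blast
    then obtain \<sigma> where \<sigma>: "generator S le C2_carrier C2_le 2 \<sigma>" "\<sigma> x \<noteq> x"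
      by (rule moved_by_C2_generator)
    have "\<exists>a\<in>A. qr_sym S le C2_carrier C2_le 2 a b" if "b \<in> S" for b
      using meets that sym_rel_qr_sym by blast
    then have "\<sigma> \<in> sym_gens S le C2_carrier C2_le 2 A"
      unfolding sym_gens_def using \<sigma>(1) by blast
    then show "x \<in> sym_set_of S le C2_carrier C2_le 2 A"
      unfolding sym_set_of_def using x \<sigma>(2) by blast
  qed
qed (auto simp: sym_set_of_def)

end

context bipartite_poset
begin

text \<open>Twins would carry a \<open>({True}, 2)\<close>-symmetry, which makes a \<open>(C\<^sub>2, 2)\<close>-symmetry covering
  the whole poset composite.\<close>
lemma twin_free_if_prime_sym_set:
  assumes prime: "prime_sym_set S le C2_carrier C2_le 2 A S"
  shows "twin_free E F le"
  unfolding twin_free_def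
proof (intro ballI impI)
  fix a a' assume a: "a \<in> E" "a' \<in> E" and twins: "\<forall>y\<in>F. le a y \<longleftrightarrow> le a' y"
  show "a = a'"
  proof (rule ccontr)
    assume "a \<noteq> a'"
    have S: "a \<in> S" using a bottom_subset by blast
    let ?X = "sym_set_of S le {True} C2_le 2 {a}"
    have via: "sym1_via S le {True} C2_le 2 (transpose a a') a a'"
      using twin_sym1_via a \<open>a \<noteq> a'\<close> twins by blast
    then have "qr_sym S le {True} C2_le 2 a a'" "qr_sym S le {True} C2_le 2 a a"
      unfolding qr_sym_def sym1_def by blast+
    then have "transpose a a' b = b" if "\<not> qr_sym S le {True} C2_le 2 a b" for b
      using that by (metis transpose_apply_other)
    then have "transpose a a' \<in> sym_gens S le {True} C2_le 2 {a}"
      unfolding sym_gens_def generator_def using twin_generator[OF a \<open>a \<noteq> a'\<close>] twins by auto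
    moreover have "transpose a a' a \<noteq> a" using \<open>a \<noteq> a'\<close> by simp
    ultimately have "?X \<noteq> {}"
      unfolding sym_set_of_def using S by blast
    have "is_sym_set S le {True} C2_le 2 ?X"
      unfolding is_sym_set_def
      by (intro exI[of _ "{a}"]) (use S poset_iso_singleton in \<open>auto simp: linked_def lt_of_def\<close>)
    have "composite_sym S le C2_carrier C2_le 2 S"
      unfolding composite_sym_def
    proof (intro exI conjI)
      show "{True} \<subseteq> C2_carrier" "(2::nat) \<le> 2" "{True} \<subset> C2_carrier \<or> {True} = C2_carrier \<and> 2 < 2"
        by (auto simp: C2_carrier_def)
      show "?X \<subseteq> S" unfolding sym_set_of_def by blast
    qed fact+
    then show False
      using prime unfolding prime_sym_set_def by blast
  qed
qed

lemma sym_step_rel_swap_bottom: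
  assumes tf: "twin_free E F le" and step: "sym_step x y" and x: "x \<in> E"
  shows "y \<in> E \<and> (\<exists>b b'. rel_swap E F le x y b b')"
  using sym_step_rel_swap[OF tf step]
proof (elim disjE exE)
  fix b b' assume s: "rel_swap E F le x y b b'"
  then show ?thesis using rel_swapD(2)[OF s] by blast
next
  fix a a' assume "rel_swap E F le a a' x y"
  from rel_swapD(3)[OF this] show ?thesis using x sides_disjoint by blast
qed

lemma sym_step_rel_swap_top:
  assumes tf: "twin_free E F le" and step: "sym_step x y" and x: "x \<in> F"
  shows "y \<in> F \<and> (\<exists>a a'. rel_swap E F le a a' x y)"
  using sym_step_rel_swap[OF tf step]
proof (elim disjE exE)
  fix b b' assume "rel_swap E F le x y b b'"
  from rel_swapD(1)[OF this] show ?thesis using x sides_disjoint by blast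
next
  fix a a' assume s: "rel_swap E F le a a' x y"
  then show ?thesis using rel_swapD(4)[OF s] by blast
qed

lemma classes_nontrivial:
  assumes "sym_step x0 y0"
  obtains p p' q q' where "p \<in> E" "p' \<in> E" "p \<noteq> p'" "q \<in> F" "q' \<in> F" "q \<noteq> q'"
proof -
  obtain \<sigma> T where g: "generator_fam S le C2_carrier C2_le 2 \<sigma> T"
    using sym_step_generator[OF assms] by blast
  obtain p q where "T 0 = {p, q}" "T 1 = {\<sigma> p, \<sigma> q}" and pq0: "lt_of le p q"
    and "\<sigma> (\<sigma> p) = p" "\<sigma> (\<sigma> q) = q" "support S \<sigma> = {p, q, \<sigma> p, \<sigma> q}"
    and pq1: "p \<in> S" "q \<in> S" "\<sigma> p \<noteq> p" "\<sigma> q \<noteq> q"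
    by (rule C2_generator_fam_cases[OF g])
  have aut: "poset_aut S le \<sigma>" using generator_fam_aut[OF g] .
  have "p \<in> E" "q \<in> F" "\<sigma> p \<in> E" "\<sigma> q \<in> F"
    using lt_from_bottom_to_top[OF pq1(1,2) pq0] poset_aut_lt_iff[OF aut pq1(1,2)] pq0
      lt_from_bottom_to_top[OF poset_aut_mem[OF aut pq1(1)] poset_aut_mem[OF aut pq1(2)]] by auto
  then show thesis
    using pq1(3,4) by (intro that[of p "\<sigma> p" q "\<sigma> q"]) auto
qed

lemma twin_free_if_classes:
  assumes classes: "S // sym_rel = {E, F}" and step: "sym_step x0 y0"
  shows "twin_free E F le"
proof -
  have E: "E \<in> S // sym_rel" and F: "F \<in> S // sym_rel" using classes by auto
  obtain A X where prime: "prime_sym_set S le C2_carrier C2_le 2 A X"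
    using step unfolding sym1_prime_def by blast
  have A: "linked S le A" "poset_iso A le C2_carrier C2_le" "X = sym_set_of S le C2_carrier C2_le 2 A"
    using prime unfolding prime_sym_set_def by auto
  have "A \<subseteq> S" using A(1) unfolding linked_def by blast
  from A(2)[unfolded poset_iso_C2_iff[OF this]] obtain a1 a2 where a: "A = {a1, a2}" "lt_of le a1 a2"
    by blast
  have a_sides: "a1 \<in> E" "a2 \<in> F"
    using lt_from_bottom_to_top[OF _ _ a(2)] \<open>A \<subseteq> S\<close> a(1) by auto
  have meets: "\<forall>b\<in>S. \<exists>a\<in>A. (a, b) \<in> sym_rel"
    using sym_rel_if_same_class[OF E a_sides(1)] sym_rel_if_same_class[OF F a_sides(2)]
      carrier_split a(1) by blast
  obtain p p' q q' where pq: "p \<in> E" "p' \<in> E" "p \<noteq> p'" "q \<in> F" "q' \<in> F" "q \<noteq> q'"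
    by (rule classes_nontrivial[OF step])
  have nontrivial: "\<exists>x'. (x, x') \<in> sym_rel \<and> x' \<noteq> x" if "x \<in> S" for x
  proof (cases "x \<in> E")
    case True
    then show ?thesis
      using sym_rel_if_same_class[OF E True pq(1)] sym_rel_if_same_class[OF E True pq(2)] pq(3)
      by blast
  next
    case False
    then have "x \<in> F" using that carrier_split by blast
    then show ?thesis
      using sym_rel_if_same_class[OF F _ pq(4)] sym_rel_if_same_class[OF F _ pq(5)] pq(6)
      by blast
  qed
  have "X = S"
    using A(3) sym_set_of_eq_carrier[OF meets] nontrivial by simp
  then show ?thesis
    using twin_free_if_prime_sym_set prime by blast
qed

lemma perfect_matching_if_classes:
  assumes classes: "S // sym_rel = {E, F}" and step: "sym_step x0 y0"
  shows "2 \<le> card E \<and> (perfect_matching E F le \<or> perfect_matching E F (\<lambda>x y. \<not> le x y))"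
proof -
  have E: "E \<in> S // sym_rel" and F: "F \<in> S // sym_rel" using classes by auto
  have tf: "twin_free E F le" using twin_free_if_classes[OF classes step] .
  obtain p p' q q' where pq: "p \<in> E" "p' \<in> E" "p \<noteq> p'"
    by (rule classes_nontrivial[OF step])
  have "pairwise_swappable E F le"
  proof (rule pairwise_swappable_if_connected)
    show "y \<in> E \<and> (\<exists>b b'. rel_swap E F le x y b b')" if "sym_step x y" "x \<in> E" for x y
      using sym_step_rel_swap_bottom[OF tf that] .
    show "y \<in> F \<and> (\<exists>a a'. rel_swap E F le a a' x y)" if "sym_step x y" "x \<in> F" for x y
      using sym_step_rel_swap_top[OF tf that] .
    show "sym_step\<^sup>*\<^sup>* x y" if "x \<in> E" "y \<in> E" for x y
      using sym_rel_if_same_class[OF E that] sym_rel_iff by blast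
    show "sym_step\<^sup>*\<^sup>* x y" if "x \<in> F" "y \<in> F" for x y
      using sym_rel_if_same_class[OF F that] sym_rel_iff by blast
  qed
  moreover have "2 \<le> card E"
    using card_mono[OF finite_subset[OF bottom_subset finite_carrier], of "{p, p'}"] pq by auto
  ultimately show ?thesis
    using pairwise_swappable_perfect_matching[OF _ pq] by blast
qed

end

context fin_poset
begin

lemma bipartite_matching_if_retract_C2:
  assumes iso: "poset_iso (S // sym_rel) (quot_le le) C2_carrier C2_le"
    and not_C2: "\<not> poset_iso S le C2_carrier C2_le"
  obtains E F where "bipartite_poset S le E F" "2 \<le> card E"
    "perfect_matching E F le \<or> perfect_matching E F (\<lambda>x y. \<not> le x y)"
proof -
  obtain E F where classes: "S // sym_rel = {E, F}" and EF: "quot_le le E F"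
    and bip: "bipartite_poset S le E F"
    by (rule retract_C2_bipartite[OF iso])
  interpret bipartite_poset S le E F by (rule bip)
  have "\<exists>x y. sym_step x y"
  proof (rule ccontr)
    assume no_step: "\<nexists>x y. sym_step x y"
    have "x = z" if "sym_step\<^sup>*\<^sup>* z x" for z x
      using that no_step by (cases rule: converse_rtranclpE) auto
    then have trivial: "sym_rel``{z} = {z}" if "z \<in> S" for z
      using that sym_rel_iff by auto
    have single: "\<exists>e. X = {e}" if "X \<in> S // sym_rel" for X
      using that trivial by (auto elim: quotientE)
    obtain e e' where "E = {e}" "F = {e'}"
      using single[of E] single[of F] classes by auto
    then have "S = {e, e'} \<and> lt_of le e e'"
      using EF carrier_split sides_disjoint unfolding quot_le_def lt_of_def by auto
    then have "poset_iso S le C2_carrier C2_le"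
      using poset_iso_C2_iff[OF order_refl] by blast
    then show False using not_C2 by contradiction
  qed
  then obtain x y where "sym_step x y" by blast
  from perfect_matching_if_classes[OF classes this] show thesis
    using that[OF bip] by blast
qed

end

context bipartite_poset
begin

text \<open>Every automorphism moves a comparable pair, so the support of any generator contains a
  2-chain and no generator can be modelled on a poset with fewer than two elements.\<close>
lemma no_composite_C2_sym:
  assumes tfE: "twin_free E F le" and tfF: "twin_free F E (\<lambda>y x. le x y)"
    and below: "\<forall>y\<in>F. \<exists>x\<in>E. le x y"
  shows "\<not> composite_sym S le C2_carrier C2_le 2 X"
proof
  assume "composite_sym S le C2_carrier C2_le 2 X"
  then obtain SQ r X' where c: "SQ \<subset> C2_carrier" "is_sym_set S le SQ C2_le r X'" "X' \<noteq> {}"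
    unfolding composite_sym_def by auto
  have "card SQ < 2"
    using psubset_card_mono[OF _ c(1)] card_C2_carrier by (simp add: C2_carrier_def)
  obtain A where "X' = sym_set_of S le SQ C2_le r A"
    using c(2) unfolding is_sym_set_def by blast
  then obtain x \<sigma> where x: "x \<in> S" "\<sigma> x \<noteq> x" and "\<sigma> \<in> sym_gens S le SQ C2_le r A"
    using c(3) unfolding sym_set_of_def by blast
  then obtain T where g: "generator_fam S le SQ C2_le r \<sigma> T"
    unfolding sym_gens_def generator_def by blast
  obtain u v where "u \<in> support S \<sigma>" "v \<in> support S \<sigma>" "u \<noteq> v" "le u v"
    using aut_moves_comparable_pair[OF tfE tfF below generator_fam_aut[OF g] x] .
  then have "2 \<le> chain_len le (support S \<sigma>)"
    by (intro chain_len_ge_2[OF support_subset])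
  then show False
    using chain_len_support_le_card[OF g finite_carrier] \<open>card SQ < 2\<close> by simp
qed

lemma rel_swap_sym_step:
  assumes tfE: "twin_free E F le" and tfF: "twin_free F E (\<lambda>y x. le x y)"
    and below: "\<forall>y\<in>F. \<exists>x\<in>E. le x y" and s: "rel_swap E F le a a' b b'"
  shows "sym_step a a'" "sym_step b b'"
proof -
  note R = rel_swapD[OF s]
  let ?\<sigma> = "transpose a a' \<circ> transpose b b'"
  have lt: "lt_of le a b" and S: "a \<in> S" "b \<in> S"
    using R(1,3,7) sides_disjoint carrier_split unfolding lt_of_def by auto
  have "linked S le {a, b}"
    unfolding linked_def
  proof (intro conjI ballI impI)
    fix u v assume "u \<in> {a, b}" "v \<in> {a, b}" "lt_of le u v"
    then have "u = a" "v = b"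
      using lt S antisym_on_carrier unfolding lt_of_def by auto
    moreover have "\<not> (lt_of le a c \<and> lt_of le c b)" if "c \<in> S" for c
      using lt_from_bottom_to_top[OF S(1) that] lt_from_bottom_to_top[OF that S(2)] sides_disjoint
      by blast
    ultimately show "covers S le u v \<or> (\<exists>c\<in>{a, b}. lt_of le u c \<and> lt_of le c v)"
      unfolding covers_def using lt by blast
  qed (use S in auto)
  moreover have "poset_iso {a, b} le C2_carrier C2_le"
    using poset_iso_C2_iff[of "{a, b}"] lt S by auto
  ultimately have prime: "prime_sym_set S le C2_carrier C2_le 2 {a, b} (sym_set_of S le C2_carrier C2_le 2 {a, b})"
    unfolding prime_sym_set_def using no_composite_C2_sym[OF tfE tfF below] by blast
  have via: "sym1_via S le C2_carrier C2_le 2 ?\<sigma> a a'" "sym1_via S le C2_carrier C2_le 2 ?\<sigma> b b'"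
    using rel_swap_sym1_via[OF s] by auto
  then have "qr_sym S le C2_carrier C2_le 2 a a'" "qr_sym S le C2_carrier C2_le 2 b b'"
    "qr_sym S le C2_carrier C2_le 2 a a" "qr_sym S le C2_carrier C2_le 2 b b"
    unfolding qr_sym_def sym1_def by blast+
  then have "?\<sigma> c = c" if "\<not> (\<exists>a0\<in>{a, b}. qr_sym S le C2_carrier C2_le 2 a0 c)" for c
  proof -
    have "c \<noteq> a" "c \<noteq> a'" "c \<noteq> b" "c \<noteq> b'"
      using that \<open>qr_sym S le C2_carrier C2_le 2 a a'\<close> \<open>qr_sym S le C2_carrier C2_le 2 b b'\<close>
        \<open>qr_sym S le C2_carrier C2_le 2 a a\<close> \<open>qr_sym S le C2_carrier C2_le 2 b b\<close> by auto
    then show ?thesis by simp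
  qed
  moreover have "generator S le C2_carrier C2_le 2 ?\<sigma>"
    unfolding generator_def using rel_swap_generator[OF s] by blast
  ultimately have gens: "?\<sigma> \<in> sym_gens S le C2_carrier C2_le 2 {a, b}"
    unfolding sym_gens_def by blast
  show "sym_step a a'"
    unfolding sym1_prime_def using prime gens via(1) by (intro exI conjI)
  show "sym_step b b'"
    unfolding sym1_prime_def using prime gens via(2) by (intro exI conjI)
qed

lemma sym_rel_classes_eq_layers:
  assumes sw: "pairwise_swappable E F le"
    and tfE: "twin_free E F le" and tfF: "twin_free F E (\<lambda>y x. le x y)"
    and below: "\<forall>y\<in>F. \<exists>x\<in>E. le x y"
  shows "\<And>x. x \<in> E \<Longrightarrow> sym_rel `` {x} = E" and "\<And>x. x \<in> F \<Longrightarrow> sym_rel `` {x} = F"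
proof -
  have same_side: "x \<in> E \<longleftrightarrow> y \<in> E" if xy: "(x, y) \<in> sym_rel" for x y
  proof -
    have "x \<in> S" "y \<in> S" using xy sym_rel_iff by auto
    then show ?thesis
      using sym_rel_down_card[OF xy] bottom_iff_down_card[OF below] by simp
  qed
  have step_E: "(x, y) \<in> sym_rel" if xy: "x \<in> E" "y \<in> E" for x y
  proof (cases "x = y")
    case False
    then obtain b b' where "rel_swap E F le x y b b'"
      using pairwise_swappableD(1)[OF sw xy] by blast
    from rel_swap_sym_step(1)[OF tfE tfF below this] show ?thesis
      using xy bottom_subset sym_rel_iff by blast
  qed (use xy bottom_subset sym_rel_iff in auto)
  have step_F: "(x, y) \<in> sym_rel" if xy: "x \<in> F" "y \<in> F" for x y
  proof (cases "x = y")
    case False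
    then obtain a a' where "rel_swap E F le a a' x y"
      using pairwise_swappableD(2)[OF sw xy] by blast
    from rel_swap_sym_step(2)[OF tfE tfF below this] show ?thesis
      using xy top_subset sym_rel_iff by blast
  qed (use xy top_subset sym_rel_iff in auto)
  show "sym_rel `` {x} = E" if x: "x \<in> E" for x
    using same_side[of x] step_E[OF x] x by blast
  show "sym_rel `` {x} = F" if x: "x \<in> F" for x
  proof
    show "sym_rel `` {x} \<subseteq> F"
      using same_side[of x] x sides_disjoint carrier_split sym_rel_iff by blast
    show "F \<subseteq> sym_rel `` {x}"
      using step_F[OF x] by blast
  qed
qed

lemma retract_C2_if_pairwise_swappable:
  assumes sw: "pairwise_swappable E F le"
    and tfE: "twin_free E F le" and tfF: "twin_free F E (\<lambda>y x. le x y)"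
    and below: "\<forall>y\<in>F. \<exists>x\<in>E. le x y" and "F \<noteq> {}"
  shows "poset_iso (S // sym_rel) (quot_le le) C2_carrier C2_le"
proof -
  note classes = sym_rel_classes_eq_layers[OF sw tfE tfF below]
  obtain y0 where y0: "y0 \<in> F" using \<open>F \<noteq> {}\<close> by blast
  then obtain x0 where x0: "x0 \<in> E" "le x0 y0" using below by blast
  have "S // sym_rel = {E, F}"
  proof
    show "S // sym_rel \<subseteq> {E, F}"
    proof
      fix X assume "X \<in> S // sym_rel"
      then obtain x where "x \<in> S" "X = sym_rel `` {x}" by (rule quotientE)
      then show "X \<in> {E, F}" using classes carrier_split by blast
    qed
    show "{E, F} \<subseteq> S // sym_rel"
      using quotientI[of x0 S sym_rel] quotientI[of y0 S sym_rel] classes(1)[OF x0(1)] classes(2)[OF y0]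
        x0(1) y0 bottom_subset top_subset by auto
  qed
  moreover have "poset_iso {E, F} (quot_le le) C2_carrier C2_le"
  proof (rule poset_iso_C2I)
    show "E \<noteq> F" using x0(1) sides_disjoint by blast
    show "quot_le le E E" "quot_le le F F" "quot_le le E F"
      unfolding quot_le_def using x0 y0 bottom_subset top_subset refl_on_carrier by blast+
    show "\<not> quot_le le F E"
      unfolding quot_le_def using not_le_top_bottom by blast
  qed simp
  ultimately show ?thesis by simp
qed

lemma retract_C2_if_perfect_matching:
  assumes pm: "perfect_matching E F le \<or> perfect_matching E F (\<lambda>x y. \<not> le x y)"
    and two: "2 \<le> card E"
  shows "poset_iso (S // sym_rel) (quot_le le) C2_carrier C2_le"
proof -
  obtain R where R: "perfect_matching E F R" "R = le \<or> R = (\<lambda>x y. \<not> le x y)"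
    using pm by blast
  have le_R: "le = R \<or> le = (\<lambda>x y. \<not> R x y)"
    using R(2) by auto
  obtain \<pi> where \<pi>: "bij_betw \<pi> E F" "\<forall>x\<in>E. \<forall>y\<in>F. R x y \<longleftrightarrow> y = \<pi> x"
    using R(1) unfolding perfect_matching_iff_bij_betw by blast
  show ?thesis
  proof (rule retract_C2_if_pairwise_swappable)
    have "pairwise_swappable E F R"
      using perfect_matching_pairwise_swappable[OF R(1)] .
    then show "pairwise_swappable E F le"
      using le_R pairwise_swappable_complement[of E F R] by auto
    have "twin_free E F R"
      using perfect_matching_twin_free[OF R(1)] .
    then show "twin_free E F le"
      using le_R twin_free_complement[of E F R] by auto
    have "twin_free F E (\<lambda>y x. R x y)"
      using perfect_matching_twin_free R(1) perfect_matching_converse by blast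
    then show "twin_free F E (\<lambda>y x. le x y)"
      using le_R twin_free_complement[of F E "\<lambda>y x. R x y"] by auto
    show "F \<noteq> {}"
      using two bij_betw_same_card[OF \<pi>(1)] by auto
    have "\<not> card E \<le> Suc 0" using two by simp
    then obtain x1 x2 where x12: "x1 \<in> E" "x2 \<in> E" "x1 \<noteq> x2"
      using card_le_Suc0_iff_eq[OF finite_subset[OF bottom_subset finite_carrier]] by blast
    show "\<forall>y\<in>F. \<exists>x\<in>E. le x y"
    proof
      fix y assume y: "y \<in> F"
      obtain x where x: "x \<in> E" "\<pi> x = y"
        using \<pi>(1) y unfolding bij_betw_def by blast
      have "R x y" "\<forall>x'\<in>E. x' \<noteq> x \<longrightarrow> \<not> R x' y"
        using \<pi> x y unfolding bij_betw_def inj_on_def by auto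
      then show "\<exists>x\<in>E. le x y"
        using le_R x(1) x12 by (metis (mono_tags))
    qed
  qed
qed

end

lemma crown_2_iso_parC2_2: "poset_iso (crown_carrier 2) crown_le (parC2_carrier 2) parC2_le"
proof -
  let ?X = "{(0, False), (0, True), (1, False), (1, True)} :: (nat \<times> bool) set"
  have carriers: "crown_carrier 2 = ?X" "parC2_carrier 2 = ?X"
    unfolding crown_carrier_def parC2_carrier_def by (auto simp: less_2_cases_iff)
  let ?f = "\<lambda>p :: nat \<times> bool. (if snd p then 1 - fst p else fst p, snd p)"
  have "bij_betw ?f ?X ?X" unfolding bij_betw_def inj_on_def by auto
  moreover have "\<forall>a\<in>?X. \<forall>b\<in>?X. crown_le a b \<longleftrightarrow> parC2_le (?f a) (?f b)"
    unfolding crown_le_def parC2_le_def by auto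
  ultimately show ?thesis
    unfolding poset_iso_def carriers by blast
qed

context fin_poset
begin

lemma bipartite_if_grid_iso:
  fixes K :: "nat \<Rightarrow> nat \<Rightarrow> bool" and tle :: "nat \<times> bool \<Rightarrow> nat \<times> bool \<Rightarrow> bool"
  assumes iso: "poset_iso S le ({..<n} \<times> UNIV) tle"
    and tle: "\<And>p q. p \<in> {..<n} \<times> UNIV \<Longrightarrow> q \<in> {..<n} \<times> UNIV \<Longrightarrow>
               tle p q \<longleftrightarrow> p = q \<or> (\<not> snd p \<and> snd q \<and> K (fst p) (fst q))"
  obtains e f where "bipartite_poset S le (e ` {..<n}) (f ` {..<n})" "inj_on e {..<n}" "inj_on f {..<n}"
    "\<And>i j. i < n \<Longrightarrow> j < n \<Longrightarrow> le (e i) (f j) \<longleftrightarrow> K i j" "card S = 2 * n"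
proof -
  let ?G = "{..<n} \<times> (UNIV :: bool set)"
  obtain \<psi> where \<psi>: "bij_betw \<psi> ?G S" and \<psi>_le: "\<And>p q. p \<in> ?G \<Longrightarrow> q \<in> ?G \<Longrightarrow> le (\<psi> p) (\<psi> q) \<longleftrightarrow> tle p q"
    using poset_iso_sym[OF iso] unfolding poset_iso_def by blast
  have \<psi>_inj: "\<psi> p = \<psi> q \<longleftrightarrow> p = q" if "p \<in> ?G" "q \<in> ?G" for p q
    using inj_on_eq_iff[OF bij_betw_imp_inj_on[OF \<psi>] that] .
  define e where "e i = \<psi> (i, False)" for i
  define f where "f i = \<psi> (i, True)" for i
  have S: "S = e ` {..<n} \<union> f ` {..<n}"
  proof -
    have "S = \<psi> ` ?G" using \<psi> unfolding bij_betw_def by simp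
    also have "?G = (\<lambda>i. (i, False)) ` {..<n} \<union> (\<lambda>i. (i, True)) ` {..<n}"
      by (auto simp: image_iff)
    finally show ?thesis unfolding e_def f_def by (simp add: image_Un image_image)
  qed
  have ef: "e i \<noteq> f j" "e i = e j \<longleftrightarrow> i = j" "f i = f j \<longleftrightarrow> i = j" if "i < n" "j < n" for i j
    using \<psi>_inj that unfolding e_def f_def by auto
  have lt: "x \<in> e ` {..<n} \<and> y \<in> f ` {..<n}" if xy: "x \<in> S" "y \<in> S" "lt_of le x y" for x y
  proof -
    obtain p q where pq: "p \<in> ?G" "q \<in> ?G" "x = \<psi> p" "y = \<psi> q"
      using xy(1,2) \<psi> unfolding bij_betw_def by auto
    then have "\<not> snd p" "snd q"
      using xy(3) \<psi>_le[OF pq(1,2)] tle[OF pq(1,2)] unfolding lt_of_def by auto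
    then show ?thesis
      using pq unfolding e_def f_def by (cases p, cases q) auto
  qed
  have "bipartite_poset S le (e ` {..<n}) (f ` {..<n})"
  proof
    show "e ` {..<n} \<inter> f ` {..<n} = {}"
    proof (rule equals0I)
      fix x assume "x \<in> e ` {..<n} \<inter> f ` {..<n}"
      then obtain i j where "i < n" "j < n" "e i = f j" by auto
      then show False using ef(1) by simp
    qed
  qed (fact S lt)+
  moreover have "inj_on e {..<n}" "inj_on f {..<n}"
    using ef unfolding inj_on_def by auto
  moreover have "le (e i) (f j) \<longleftrightarrow> K i j" if "i < n" "j < n" for i j
    using \<psi>_le[of "(i, False)" "(j, True)"] tle[of "(i, False)" "(j, True)"] that unfolding e_def f_def
    by simp
  moreover have "card S = 2 * n"
    using card_eq_if_poset_iso[OF iso] by (simp add: card_cartesian_product)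
  ultimately show thesis
    by (rule that)
qed

lemma retract_C2_if_grid_iso:
  fixes K :: "nat \<Rightarrow> nat \<Rightarrow> bool" and tle :: "nat \<times> bool \<Rightarrow> nat \<times> bool \<Rightarrow> bool"
  assumes iso: "poset_iso S le ({..<n} \<times> UNIV) tle"
    and tle: "\<And>p q. p \<in> {..<n} \<times> UNIV \<Longrightarrow> q \<in> {..<n} \<times> UNIV \<Longrightarrow>
               tle p q \<longleftrightarrow> p = q \<or> (\<not> snd p \<and> snd q \<and> K (fst p) (fst q))"
    and K: "K = (=) \<or> K = (\<noteq>)" and "2 \<le> n"
  shows "poset_iso (S // sym_rel) (quot_le le) C2_carrier C2_le \<and> \<not> poset_iso S le C2_carrier C2_le"
proof
  obtain e f where bip: "bipartite_poset S le (e ` {..<n}) (f ` {..<n})"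
    and inj: "inj_on e {..<n}" "inj_on f {..<n}"
    and ef: "\<And>i j. i < n \<Longrightarrow> j < n \<Longrightarrow> le (e i) (f j) \<longleftrightarrow> K i j" and card: "card S = 2 * n"
    using bipartite_if_grid_iso[OF iso tle] by blast
  interpret bipartite_poset S le "e ` {..<n}" "f ` {..<n}" by (rule bip)
  from K have "perfect_matching (e ` {..<n}) (f ` {..<n}) le \<or>
        perfect_matching (e ` {..<n}) (f ` {..<n}) (\<lambda>x y. \<not> le x y)"
  proof
    assume "K = (=)"
    then have "perfect_matching (e ` {..<n}) (f ` {..<n}) le"
      using ef by (intro perfect_matching_indexed[OF inj]) auto
    then show ?thesis ..
  next
    assume "K = (\<noteq>)"
    then have "perfect_matching (e ` {..<n}) (f ` {..<n}) (\<lambda>x y. \<not> le x y)"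
      using ef by (intro perfect_matching_indexed[OF inj]) auto
    then show ?thesis ..
  qed
  moreover have "2 \<le> card (e ` {..<n})"
    using card_image[OF inj(1)] \<open>2 \<le> n\<close> by simp
  ultimately show "poset_iso (S // sym_rel) (quot_le le) C2_carrier C2_le"
    by (rule retract_C2_if_perfect_matching)
  show "\<not> poset_iso S le C2_carrier C2_le"
  proof
    assume "poset_iso S le C2_carrier C2_le"
    then have "card S = 2" using card_eq_if_poset_iso card_C2_carrier by metis
    then show False using card \<open>2 \<le> n\<close> by simp
  qed
qed

lemma retract_C2_if_parC2_or_crown:
  assumes "(\<exists>n\<ge>2. poset_iso S le (parC2_carrier n) parC2_le) \<or>
           (\<exists>n\<ge>3. poset_iso S le (crown_carrier n) crown_le)"
  shows "poset_iso (S // sym_rel) (quot_le le) C2_carrier C2_le \<and> \<not> poset_iso S le C2_carrier C2_le"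
  using assms
proof (elim disjE exE conjE)
  fix n :: nat assume "2 \<le> n" "poset_iso S le (parC2_carrier n) parC2_le"
  then show ?thesis
    unfolding parC2_carrier_def
    by (intro retract_C2_if_grid_iso[where K = "(=)" and tle = parC2_le]) (auto simp: parC2_le_def)
next
  fix n :: nat assume "3 \<le> n" "poset_iso S le (crown_carrier n) crown_le"
  then show ?thesis
    unfolding crown_carrier_def
    by (intro retract_C2_if_grid_iso[where K = "(\<noteq>)" and tle = crown_le]) (auto simp: crown_le_def)
qed

lemma parC2_or_crown_if_retract_C2:
  assumes iso: "poset_iso (S // sym_rel) (quot_le le) C2_carrier C2_le"
    and not_C2: "\<not> poset_iso S le C2_carrier C2_le"
  shows "(\<exists>n\<ge>2. poset_iso S le (parC2_carrier n) parC2_le) \<or>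
         (\<exists>n\<ge>3. poset_iso S le (crown_carrier n) crown_le)"
proof -
  obtain E F where bip: "bipartite_poset S le E F" and two: "2 \<le> card E"
    and pm: "perfect_matching E F le \<or> perfect_matching E F (\<lambda>x y. \<not> le x y)"
    by (rule bipartite_matching_if_retract_C2[OF iso not_C2])
  interpret bipartite_poset S le E F by (rule bip)
  consider "perfect_matching E F le" | "perfect_matching E F (\<lambda>x y. \<not> le x y)" "3 \<le> card E"
    | "perfect_matching E F (\<lambda>x y. \<not> le x y)" "card E = 2"
    using pm two by linarith
  then show ?thesis
  proof cases
    case 1
    then show ?thesis using poset_iso_parC2_if_perfect_matching[OF 1] two by blast
  next
    case 2
    then show ?thesis using poset_iso_crown_if_perfect_matching_complement[OF 2(1)] by blast
  next
    case 3
    then have "poset_iso S le (crown_carrier 2) crown_le"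
      using poset_iso_crown_if_perfect_matching_complement[OF 3(1)] by simp
    then show ?thesis
      using poset_iso_trans[OF _ crown_2_iso_parC2_2] by blast
  qed
qed

end

theorem mainTheorem7:
  fixes S :: "'a set" and le :: "'a \<Rightarrow> 'a \<Rightarrow> bool"
  assumes "finite_poset S le"
  shows "in_odot' S le C2_carrier C2_le C2_carrier C2_le 2 \<longleftrightarrow>
         ((\<exists>n\<ge>2. poset_iso S le (parC2_carrier n) parC2_le) \<or>
          (\<exists>n\<ge>3. poset_iso S le (crown_carrier n) crown_le))"
proof -
  interpret fin_poset S le by (rule fin_poset.intro) (rule assms)
  show ?thesis
    unfolding in_odot'_def retract'_carrier_def
    using parC2_or_crown_if_retract_C2 retract_C2_if_parC2_or_crown by blast
qed

end
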